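(* Let $N\ge3$ and $p>p_{\rm S}=\frac{N+2}{N-2}$. There exist $\Theta^*\in(0,\pi)$ and a function $U^*\in C^2(0,\Theta^*]$ which solves $U''+(N-1)\frac{\cos\theta}{\sin\theta}U'+U^p=0$ on $(0,\Theta^* )$, $U^*(\Theta^* )=0$, $U^*>0$ on $(0,\Theta^* )$, and $$U^*(\theta)=a\left(\cos\tfrac{\theta}{2}\right)^{-(N-2)}\left(2\tan\tfrac{\theta}{2}\right)^{-\mu}(1+o(1))\quad\text{as }\theta\downarrow0,$$ where $\mu:=\frac{2}{p-1}$ and $a:=\{\mu(N-2-\mu)\}^{\mu/2}$. *)

theory Defs
  imports Complex_Main
begin

end

theory Submission
  imports Defs "HOL-Analysis.Analysis"
begin

text \<open>After the substitution \<open>U = \<theta>\<^sup>-\<^sup>\<mu> y\<close> the equation becomes a first-order system of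
  Euler type with a singular equilibrium at \<open>y = a\<close>. Because \<open>p > p\<^sub>S\<close>, both eigenvalues of its
  linearisation have nonpositive real part, so the deviation from the equilibrium is obtained, by
  variation of constants from \<open>\<theta> = 0\<close>, as the fixed point of a contraction. The contraction acts
  on functions on \<open>(0, t2]\<close> measured against the weight \<open>max (\<theta>\<^sup>2) (t1\<^sup>2\<^sup>-\<^sup>k \<theta>\<^sup>k)\<close>: below
  \<open>t1\<close> the deviation is \<open>O(\<theta>\<^sup>2)\<close> and the nonlinearity is nearly linear, beyond \<open>t1\<close> a large
  \<open>k\<close> beats the Lipschitz constant of the (truncated) nonlinearity. The fixed point is a solution
  with \<open>U \<sim> a \<theta>\<^sup>-\<^sup>\<mu>\<close> at \<open>0\<close>. Since \<open>(sin\<^sup>N\<^sup>-\<^sup>1 U')' = - sin\<^sup>N\<^sup>-\<^sup>1 U\<^sup>p \<le> 0\<close> and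
  \<open>sin\<^sup>N\<^sup>-\<^sup>1 U'\<close> is already negative at \<open>t1\<close>, we get \<open>U' \<le> - c / sin\<^sup>2 \<theta>\<close> beyond \<open>t1\<close>, and
  comparison with \<open>c cot \<theta>\<close> makes \<open>U\<close> vanish before \<open>t2 < \<pi>\<close>; up to that zero
  \<open>0 < y \<le> Y\<close>, so the truncation is never active.\<close>

section \<open>Complex powers and the Euler operator\<close>

lemma norm_of_real_powr: "t \<ge> 0 \<Longrightarrow> norm (complex_of_real t powr l) = t powr Re l"
  by (simp add: norm_powr_real_powr)

lemma has_vector_derivative_of_real_powr:
  assumes "t > 0"
  shows "((\<lambda>x. complex_of_real x powr l) has_vector_derivative
           l * complex_of_real t powr l / complex_of_real t) (at t within S)"
proof -
  have "((\<lambda>z. z powr l) has_field_derivative l * complex_of_real t powr (l - 1)) (at (of_real t))"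
    using assms by (intro has_field_derivative_powr) (auto simp: complex_nonpos_Reals_iff)
  moreover have "complex_of_real t powr (l - 1) = complex_of_real t powr l / complex_of_real t"
    using assms by (simp add: powr_diff)
  ultimately show ?thesis
    by (auto intro: has_vector_derivative_real_field)
qed

lemma continuous_on_of_real_powr: "continuous_on {0<..} (\<lambda>x. complex_of_real x powr l)"
  unfolding continuous_on_eq_continuous_within
  using has_vector_derivative_of_real_powr has_vector_derivative_continuous by fastforce

lemma powr_tendsto_0_at_right: "e > 0 \<Longrightarrow> ((\<lambda>s::real. s powr e) \<longlongrightarrow> 0) (at_right 0)"
  by (rule tendsto_zero_powrI[where b=e]) (auto intro: tendsto_ident_at eventually_at_rightI[of 0 1])

lemma continuous_on_zero_extension:
  fixes f :: "real \<Rightarrow> 'a::real_normed_vector"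
  assumes "b > 0" "continuous_on {0<..b} f" "\<And>s. s \<in> {0<..b} \<Longrightarrow> norm (f s) \<le> g s"
    and "(g \<longlongrightarrow> 0) (at_right 0)"
  shows "continuous_on {0..b} (\<lambda>s. if s = 0 then 0 else f s)"
  unfolding continuous_on_eq_continuous_within
proof
  fix x assume x: "x \<in> {0..b}"
  show "continuous (at x within {0..b}) (\<lambda>s. if s = 0 then 0 else f s)"
  proof (cases "x = 0")
    case True
    have "\<forall>\<^sub>F s in at_right 0. norm (if s = 0 then 0 else f s) \<le> g s"
      unfolding eventually_at_right_field
      using assms(1,3) by (intro exI[of _ b]) (auto simp: less_imp_le)
    then have "((\<lambda>s. if s = 0 then 0 else f s) \<longlongrightarrow> 0) (at_right 0)"
      by (rule Lim_null_comparison[OF _ assms(4)])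
    then show ?thesis
      using True assms(1) by (simp add: continuous_within at_within_Icc_at_right)
  next
    case False
    then have "x > 0" using x by auto
    have "continuous (at x within {0<..b}) f"
      using assms(2) x \<open>x > 0\<close> by (simp add: continuous_on_eq_continuous_within)
    then have "continuous (at x within {0<..b}) (\<lambda>s. if s = 0 then 0 else f s)"
      by (rule continuous_transform_within[where \<delta>=x]) (use \<open>x > 0\<close> x in \<open>auto simp: dist_real_def\<close>)
    moreover have "at x within {0..b} = at x within {0<..b}"
      by (rule at_within_nhd[where S="{0<..}"]) (use \<open>x > 0\<close> in auto)
    ultimately show ?thesis by (simp add: continuous_within)
  qed
qed

text \<open>Variation of constants for the Euler equation \<open>t \<eta>' = l \<eta> + G\<close>; the integrand
  is extended by \<open>0\<close> at \<open>s = 0\<close>.\<close>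
definition euler_inverse :: "complex \<Rightarrow> (real \<Rightarrow> complex) \<Rightarrow> real \<Rightarrow> complex" where
  "euler_inverse l G t = complex_of_real t powr l *
     integral {0..t} (\<lambda>s. if s = 0 then 0 else complex_of_real s powr (-l-1) * G s)"

lemma euler_inverse_cong:
  "(\<And>x. x \<in> {0<..t} \<Longrightarrow> G x = G' x) \<Longrightarrow> euler_inverse l G t = euler_inverse l G' t"
  unfolding euler_inverse_def by (intro arg_cong[where f="\<lambda>u. _ * u"] integral_cong) auto

locale euler_forcing =
  fixes l :: complex and k b A B :: real and G :: "real \<Rightarrow> complex"
  assumes Re_l: "Re l \<le> 0" and k: "2 \<le> k" and b: "0 < b" and A: "0 \<le> A" and B: "0 \<le> B"
    and G_cont: "continuous_on {0<..b} G"
    and G_bound: "\<And>s. s \<in> {0<..b} \<Longrightarrow> norm (G s) \<le> A * s\<^sup>2 + B * s powr k"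
begin

definition "integrand s = (if s = 0 then 0 else complex_of_real s powr (-l-1) * G s)"
definition "majorant s = A * s powr (1 - Re l) + B * s powr (k - 1 - Re l)"

lemma norm_integrand_le: "s \<in> {0..b} \<Longrightarrow> norm (integrand s) \<le> majorant s"
proof (cases "s = 0")
  case False
  assume s: "s \<in> {0..b}"
  then have "s > 0" using False by auto
  have "norm (integrand s) = s powr (- Re l - 1) * norm (G s)"
    using \<open>s > 0\<close> by (simp add: integrand_def norm_mult norm_of_real_powr)
  also have "\<dots> \<le> s powr (- Re l - 1) * (A * s\<^sup>2 + B * s powr k)"
    using G_bound[of s] \<open>s > 0\<close> s by (intro mult_left_mono) auto
  also have "\<dots> = A * (s powr (- Re l - 1) * s powr 2) + B * (s powr (- Re l - 1) * s powr k)"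
    using \<open>s > 0\<close> by (simp add: algebra_simps powr_numeral)
  also have "\<dots> = majorant s"
    unfolding majorant_def powr_add[symmetric] by (simp add: algebra_simps)
  finally show ?thesis .
qed (simp add: integrand_def majorant_def)

lemma integrand_continuous: "continuous_on {0..b} integrand"
proof -
  have "(majorant \<longlongrightarrow> A * 0 + B * 0) (at_right 0)"
    unfolding majorant_def using Re_l k by (intro tendsto_intros powr_tendsto_0_at_right) auto
  then have "(majorant \<longlongrightarrow> 0) (at_right 0)" by simp
  moreover have "continuous_on {0<..b} (\<lambda>s. complex_of_real s powr (- l - 1) * G s)"
    by (intro continuous_intros G_cont continuous_on_subset[OF continuous_on_of_real_powr]) auto
  ultimately show ?thesis
    unfolding integrand_def[abs_def]
  proof (intro continuous_on_zero_extension[OF b])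
    show "norm (complex_of_real s powr (- l - 1) * G s) \<le> majorant s" if "s \<in> {0<..b}" for s
      using norm_integrand_le[of s] that by (simp add: integrand_def)
  qed
qed

lemma euler_inverse_eq: "euler_inverse l G t = complex_of_real t powr l * integral {0..t} integrand"
  by (simp add: euler_inverse_def integrand_def[abs_def])

lemma norm_euler_inverse_le:
  assumes t: "t \<in> {0<..b}"
  shows "norm (euler_inverse l G t) \<le> A / (2 - Re l) * t\<^sup>2 + B / (k - Re l) * t powr k"
proof -
  have "t > 0" using t by auto
  have majorant_integral:
    "(majorant has_integral A * (t powr (2 - Re l) / (2 - Re l)) + B * (t powr (k - Re l) / (k - Re l))) {0..t}"
  proof -
    have "((\<lambda>s. s powr (1 - Re l)) has_integral t powr (1 - Re l + 1) / (1 - Re l + 1)) {0..t}"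
      "((\<lambda>s. s powr (k - 1 - Re l)) has_integral t powr (k - 1 - Re l + 1) / (k - 1 - Re l + 1)) {0..t}"
      using Re_l k \<open>t > 0\<close> by (intro has_integral_powr_from_0; simp)+
    from has_integral_add[OF this[THEN has_integral_mult_right]] show ?thesis
      unfolding majorant_def by (simp add: algebra_simps)
  qed
  have "norm (integral {0..t} integrand) \<le> integral {0..t} majorant"
    using t norm_integrand_le
    by (intro integral_norm_bound_integral[OF _ has_integral_integrable[OF majorant_integral]]
          integrable_continuous_real continuous_on_subset[OF integrand_continuous]) auto
  also have "\<dots> = A * (t powr (2 - Re l) / (2 - Re l)) + B * (t powr (k - Re l) / (k - Re l))"
    using majorant_integral by (rule integral_unique)
  finally have "norm (euler_inverse l G t) \<le>
      t powr Re l * (A * (t powr (2 - Re l) / (2 - Re l)) + B * (t powr (k - Re l) / (k - Re l)))"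
    using \<open>t > 0\<close> by (simp add: euler_inverse_eq norm_mult norm_of_real_powr mult_left_mono)
  also have "\<dots> = A / (2 - Re l) * (t powr Re l * t powr (2 - Re l)) +
                   B / (k - Re l) * (t powr Re l * t powr (k - Re l))"
    by (simp add: algebra_simps)
  also have "\<dots> = A / (2 - Re l) * t\<^sup>2 + B / (k - Re l) * t powr k"
    unfolding powr_add[symmetric] using \<open>t > 0\<close> by (simp add: powr_numeral)
  finally show ?thesis .
qed

lemma euler_inverse_has_vector_derivative:
  assumes t: "t \<in> {0<..b}"
  shows "(euler_inverse l G has_vector_derivative (l * euler_inverse l G t + G t) / of_real t)
           (at t within {0<..b})"
proof -
  have "t > 0" using t by auto
  have "((\<lambda>u. integral {0..u} integrand) has_vector_derivative integrand t) (at t within {0<..b})"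
    by (rule has_vector_derivative_within_subset[OF integral_has_vector_derivative[OF integrand_continuous]])
       (use t in auto)
  from has_vector_derivative_mult[OF has_vector_derivative_of_real_powr[OF \<open>t > 0\<close>] this]
  have "((\<lambda>u. complex_of_real u powr l * integral {0..u} integrand) has_vector_derivative
      complex_of_real t powr l * integrand t +
      l * complex_of_real t powr l / of_real t * integral {0..t} integrand) (at t within {0<..b})" .
  moreover have "complex_of_real t powr l * integrand t = G t / of_real t"
    using \<open>t > 0\<close> by (simp add: integrand_def mult.assoc[symmetric] powr_add[symmetric] powr_minus_divide)
  ultimately show ?thesis
    unfolding euler_inverse_eq[abs_def]
    by (elim has_vector_derivative_eq_rhs) (simp add: add_divide_distrib)
qed

lemma euler_inverse_continuous: "continuous_on {0<..b} (euler_inverse l G)"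
  unfolding continuous_on_eq_continuous_within
  using euler_inverse_has_vector_derivative has_vector_derivative_continuous by blast

end

lemma euler_inverse_diff:
  assumes "euler_forcing l k b A B G" "euler_forcing l k b A' B' G'" and t: "t \<in> {0<..b}"
  shows "euler_inverse l G t - euler_inverse l G' t = euler_inverse l (\<lambda>s. G s - G' s) t"
proof -
  interpret F: euler_forcing l k b A B G by fact
  interpret F': euler_forcing l k b A' B' G' by fact
  have "{0..t} \<subseteq> {0..b}" using t by auto
  then have "F.integrand integrable_on {0..t}" "F'.integrand integrable_on {0..t}"
    by (auto intro!: integrable_continuous_real continuous_on_subset[OF F.integrand_continuous]
          continuous_on_subset[OF F'.integrand_continuous])
  moreover have "(\<lambda>s. if s = 0 then 0 else complex_of_real s powr (-l-1) * (G s - G' s)) =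
                 (\<lambda>s. F.integrand s - F'.integrand s)"
    by (auto simp: F.integrand_def F'.integrand_def algebra_simps)
  ultimately show ?thesis
    by (simp add: euler_inverse_def[of _ "\<lambda>s. G s - G' s"] F.euler_inverse_eq
          F'.euler_inverse_eq integral_diff right_diff_distrib)
qed

definition weight :: "real \<Rightarrow> real \<Rightarrow> real \<Rightarrow> real" where
  "weight t1 k t = max (t\<^sup>2) (t1 powr (2 - k) * t powr k)"

lemma weight_pos: "(t::real) > 0 \<Longrightarrow> weight t1 k t > 0"
  by (simp add: weight_def less_max_iff_disj)

lemma continuous_on_weight: "continuous_on {0<..} (weight t1 k)"
  unfolding weight_def by (intro continuous_intros) auto

lemma weight_le_sum: "(t::real) > 0 \<Longrightarrow> weight t1 k t \<le> t\<^sup>2 + t1 powr (2 - k) * t powr k"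
  by (simp add: weight_def)

lemma power_scale_eq:
  fixes t t1 k :: real
  shows "t > 0 \<Longrightarrow> t1 > 0 \<Longrightarrow> t1 powr (2 - k) * t powr k = t\<^sup>2 * (t / t1) powr (k - 2)"
  by (simp add: powr_diff powr_divide powr_minus field_simps powr_numeral)

lemma weight_eq_square:
  fixes t t1 k :: real
  assumes "0 < t" "t \<le> t1" "2 \<le> k" shows "weight t1 k t = t\<^sup>2"
proof -
  have "(t / t1) powr (k - 2) \<le> 1 powr (k - 2)"
    using assms by (intro powr_mono2) auto
  then show ?thesis
    using assms power_scale_eq[of t t1 k] mult_left_mono[of "(t / t1) powr (k - 2)" 1 "t\<^sup>2"]
    by (simp add: weight_def)
qed

lemma square_le_power_scale:
  fixes t t1 k :: real
  assumes "0 < t1" "t1 \<le> t" "2 \<le> k" shows "t\<^sup>2 \<le> t1 powr (2 - k) * t powr k"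
  using assms power_scale_eq[of t t1 k] mult_left_mono[of 1 "(t / t1) powr (k - 2)" "t\<^sup>2"]
  by (simp add: ge_one_powr_ge_zero)

lemma weight_eq_power: "0 < (t1::real) \<Longrightarrow> t1 \<le> t \<Longrightarrow> 2 \<le> k \<Longrightarrow> weight t1 k t = t1 powr (2 - k) * t powr k"
  using square_le_power_scale by (simp add: weight_def)

definition two_scale_bounded :: "real \<Rightarrow> real \<Rightarrow> real \<Rightarrow> real \<Rightarrow> real \<Rightarrow> (real \<Rightarrow> complex) \<Rightarrow> bool" where
  "two_scale_bounded b t1 k A B G \<longleftrightarrow> continuous_on {0<..b} G \<and>
     (\<forall>s\<in>{0<..b}. norm (G s) \<le> A * s\<^sup>2 + B * (t1 powr (2 - k) * s powr k))"

lemma two_scale_boundedI: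
  "continuous_on {0<..b} G \<Longrightarrow> (\<And>s. s \<in> {0<..b} \<Longrightarrow> norm (G s) \<le> A * s\<^sup>2 + B * (t1 powr (2 - k) * s powr k))
   \<Longrightarrow> two_scale_bounded b t1 k A B G"
  by (simp add: two_scale_bounded_def)

lemma two_scale_bounded_weightI:
  assumes "continuous_on {0<..b} G" "\<And>s. s \<in> {0<..b} \<Longrightarrow> norm (G s) \<le> C * weight t1 k s" "0 \<le> C"
  shows "two_scale_bounded b t1 k C C G"
proof (rule two_scale_boundedI[OF assms(1)])
  fix s assume "s \<in> {0<..b}"
  then show "norm (G s) \<le> C * s\<^sup>2 + C * (t1 powr (2 - k) * s powr k)"
    using assms(2)[of s] weight_le_sum[of s t1 k] mult_left_mono[OF _ assms(3)]
    by (fastforce simp: algebra_simps)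
qed

lemma two_scale_bounded_add:
  "two_scale_bounded b t1 k A B G \<Longrightarrow> two_scale_bounded b t1 k A' B' G' \<Longrightarrow>
   two_scale_bounded b t1 k (A + A') (B + B') (\<lambda>s. G s + G' s)"
proof (rule two_scale_boundedI)
  assume G: "two_scale_bounded b t1 k A B G" and G': "two_scale_bounded b t1 k A' B' G'"
  then show "continuous_on {0<..b} (\<lambda>s. G s + G' s)"
    by (intro continuous_intros) (auto simp: two_scale_bounded_def)
  fix s assume "s \<in> {0<..b}"
  then have "norm (G s) + norm (G' s) \<le>
      (A * s\<^sup>2 + B * (t1 powr (2 - k) * s powr k)) + (A' * s\<^sup>2 + B' * (t1 powr (2 - k) * s powr k))"
    using G G' by (intro add_mono) (auto simp: two_scale_bounded_def)
  then show "norm (G s + G' s) \<le> (A + A') * s\<^sup>2 + (B + B') * (t1 powr (2 - k) * s powr k)"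
    using norm_triangle_ineq[of "G s" "G' s"] by (simp add: algebra_simps)
qed

lemma euler_forcing_if_two_scale_bounded:
  "Re l \<le> 0 \<Longrightarrow> 2 \<le> k \<Longrightarrow> 0 < b \<Longrightarrow> 0 \<le> A \<Longrightarrow> 0 \<le> B \<Longrightarrow> two_scale_bounded b t1 k A B G \<Longrightarrow>
   euler_forcing l k b A (B * t1 powr (2 - k)) G"
  unfolding two_scale_bounded_def by unfold_locales (auto simp: algebra_simps)

lemma norm_euler_inverse_le_weight:
  assumes "Re l \<le> 0" "2 \<le> k" "0 < b" "0 \<le> A" "0 \<le> B" "two_scale_bounded b t1 k A B G"
    and "t \<in> {0<..b}"
  shows "norm (euler_inverse l G t) \<le> (A / (2 - Re l) + B / (k - Re l)) * weight t1 k t"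
proof -
  interpret euler_forcing l k b A "B * t1 powr (2 - k)" G
    using assms(1-6) by (rule euler_forcing_if_two_scale_bounded)
  have "norm (euler_inverse l G t) \<le> A / (2 - Re l) * t\<^sup>2 + B / (k - Re l) * (t1 powr (2 - k) * t powr k)"
    using norm_euler_inverse_le[OF assms(7)] by (simp add: algebra_simps)
  also have "\<dots> \<le> A / (2 - Re l) * weight t1 k t + B / (k - Re l) * weight t1 k t"
    using assms by (intro add_mono mult_left_mono) (auto simp: weight_def)
  finally show ?thesis by (simp add: algebra_simps)
qed

lemma two_scale_bounded_euler_inverse:
  assumes "Re l \<le> 0" "2 \<le> k" "0 < b" "0 \<le> A" "0 \<le> B" "two_scale_bounded b t1 k A B G"
  defines "E \<equiv> A / (2 - Re l) + B / (k - Re l)"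
  shows "two_scale_bounded b t1 k E E (euler_inverse l G)"
proof (rule two_scale_bounded_weightI)
  interpret euler_forcing l k b A "B * t1 powr (2 - k)" G
    using assms by (intro euler_forcing_if_two_scale_bounded)
  show "continuous_on {0<..b} (euler_inverse l G)" by (rule euler_inverse_continuous)
  show "norm (euler_inverse l G s) \<le> E * weight t1 k s" if "s \<in> {0<..b}" for s
    unfolding E_def using assms(1-6) that by (rule norm_euler_inverse_le_weight)
  show "0 \<le> E" unfolding E_def using assms by auto
qed


lemma cos_ge_one_minus_half_square: "cos (x::real) \<ge> 1 - x\<^sup>2 / 2"
proof -
  have "cos x = 1 - 2 * (sin (x/2))\<^sup>2"
    using cos_double_sin[of "x/2"] by simp
  moreover have "(sin (x/2))\<^sup>2 \<le> (x/2)\<^sup>2"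
    using abs_sin_x_le_abs_x[of "x/2"] by (metis abs_ge_zero power2_abs power_mono)
  ultimately show ?thesis by (simp add: power_divide)
qed

lemma sin_ge_minus_cube_sixth: assumes "(x::real) \<ge> 0" shows "sin x \<ge> x - x ^ 3 / 6"
proof -
  have "(\<lambda>x. sin x - x + x ^ 3 / 6) 0 \<le> (\<lambda>x. sin x - x + x ^ 3 / 6) x"
  proof (rule DERIV_nonneg_imp_nondecreasing[OF assms])
    fix y :: real
    have "((\<lambda>x. sin x - x + x ^ 3 / 6) has_real_derivative cos y - 1 + y\<^sup>2 / 2) (at y)"
      by (auto intro!: derivative_eq_intros simp: power2_eq_square field_simps)
    moreover have "0 \<le> cos y - 1 + y\<^sup>2 / 2" using cos_ge_one_minus_half_square[of y] by linarith
    ultimately show "\<exists>y'. ((\<lambda>x. sin x - x + x ^ 3 / 6) has_real_derivative y') (at y) \<and> 0 \<le> y'"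
      by blast
  qed
  then show ?thesis by simp
qed

lemma exists_near_pi_cot_less: "\<exists>t. pi - 1 \<le> t \<and> t < pi \<and> cot t < c"
proof -
  define z where "z = min 1 (1 / (2 * (\<bar>c\<bar> + 1)))"
  have z: "0 < z" "z \<le> 1" "z * (2 * (\<bar>c\<bar> + 1)) \<le> 1"
    by (auto simp: z_def min_def field_simps)
  have "0 < sin z" "sin z \<le> z" using z pi_gt3 by (auto intro!: sin_gt_zero sin_x_le_x)
  moreover have "cos z \<ge> 1/2"
    using cos_ge_one_minus_half_square[of z] z power_le_one[of z 2] by simp
  ultimately have "cot z \<ge> (1/2) / z"
    unfolding cot_def using z by (intro frac_le) auto
  also have "(1/2) / z \<ge> \<bar>c\<bar> + 1" using z by (simp add: field_simps)
  finally have "cot (pi - z) < c" by (simp add: cot_def)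
  then show ?thesis using z by (intro exI[of _ "pi - z"]) auto
qed

lemma tan_half_over_tendsto: "((\<lambda>x::real. 2 * tan (x / 2) / x) \<longlongrightarrow> 1) (at_right 0)"
proof -
  have "((\<lambda>x::real. 2 * tan (x / 2)) has_real_derivative 1) (at 0)"
    by (auto intro!: derivative_eq_intros)
  then have "((\<lambda>y::real. 2 * tan (y / 2) / y) \<longlongrightarrow> 1) (at 0)"
    unfolding has_field_derivative_iff by simp
  then show ?thesis by (simp add: filterlim_at_split)
qed

lemma has_real_derivative_nonpos_imp_le:
  fixes f :: "real \<Rightarrow> real"
  assumes "a \<le> b" "\<And>x. x \<in> {a..b} \<Longrightarrow> (f has_real_derivative f' x) (at x within {a..b})"
    and "\<And>x. x \<in> {a..b} \<Longrightarrow> f' x \<le> 0"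
  shows "f b \<le> f a"
proof -
  obtain x where "x \<in> {a..b}" "f b - f a = f' x * (b - a)"
    using mvt_very_simple[OF assms(1), of f "\<lambda>x h. f' x * h"] assms(2)
    unfolding has_field_derivative_def by auto
  moreover have "f' x * (b - a) \<le> 0"
    using assms(1) assms(3)[OF \<open>x \<in> {a..b}\<close>] by (simp add: mult_nonpos_nonneg)
  ultimately show ?thesis by simp
qed

lemma has_real_derivative_neg_imp_less:
  fixes f :: "real \<Rightarrow> real"
  assumes "a < b" "\<And>x. x \<in> {a..b} \<Longrightarrow> (f has_real_derivative f' x) (at x within {a..b})"
    and "\<And>x. x \<in> {a..b} \<Longrightarrow> f' x < 0"
  shows "f b < f a"
proof -
  obtain x where "x \<in> {a<..<b}" "f b - f a = f' x * (b - a)"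
    using mvt_simple[OF assms(1), of f "\<lambda>x h. f' x * h"] assms(2)
    unfolding has_field_derivative_def by auto
  moreover have "f' x * (b - a) < 0"
    using assms(1) assms(3)[of x] \<open>x \<in> {a<..<b}\<close> by (simp add: mult_neg_pos)
  ultimately show ?thesis by simp
qed

lemma lipschitz_of_deriv_bound:
  fixes f :: "real \<Rightarrow> real"
  assumes "continuous_on {u..v} f"
    and "\<And>z. z \<in> {u<..<v} \<Longrightarrow> (f has_real_derivative f' z) (at z)"
    and "\<And>z. z \<in> {u<..<v} \<Longrightarrow> \<bar>f' z\<bar> \<le> L"
    and "x \<in> {u..v}" "y \<in> {u..v}"
  shows "\<bar>f x - f y\<bar> \<le> L * \<bar>x - y\<bar>"
proof -
  have *: "\<bar>f y - f x\<bar> \<le> L * (y - x)" if "x < y" "x \<in> {u..v}" "y \<in> {u..v}" for x y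
  proof -
    have "continuous_on {x..y} f" using assms(1) that by (auto intro: continuous_on_subset)
    moreover have "f differentiable (at z)" if "x < z" "z < y" for z
      using assms(2)[of z] that \<open>x \<in> {u..v}\<close> \<open>y \<in> {u..v}\<close>
      by (auto simp: real_differentiable_def)
    ultimately obtain l z where z: "x < z" "z < y" "(f has_real_derivative l) (at z)" "f y - f x = (y - x) * l"
      using MVT[OF \<open>x < y\<close>] by blast
    then have "l = f' z" using that by (intro DERIV_unique[OF z(3) assms(2)]) auto
    then have "\<bar>l\<bar> \<le> L" using assms(3) z that by auto
    then show ?thesis using z(4) that by (simp add: abs_mult mult.commute mult_right_mono)
  qed
  show ?thesis
    using *[of x y] *[of y x] assms(4,5) by (cases x y rule: linorder_cases) (auto simp: abs_minus_commute)
qed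

lemma abs_powr_diff_le:
  fixes p Y :: real
  assumes "p > 1" "x \<in> {0..Y}" "y \<in> {0..Y}"
  shows "\<bar>x powr p - y powr p\<bar> \<le> p * Y powr (p - 1) * \<bar>x - y\<bar>"
proof (rule lipschitz_of_deriv_bound[OF _ _ _ assms(2,3)])
  show "continuous_on {0..Y} (\<lambda>x. x powr p)"
    using assms(1) by (intro continuous_on_powr' continuous_intros) auto
  fix z assume z: "z \<in> {0<..<Y}"
  show "((\<lambda>x. x powr p) has_real_derivative p * z powr (p - 1)) (at z)"
    using z by (intro has_real_derivative_powr) auto
  have "z powr (p - 1) \<le> Y powr (p - 1)" using z assms(1) by (intro powr_mono2) auto
  then show "\<bar>p * z powr (p - 1)\<bar> \<le> p * Y powr (p - 1)" using assms(1) by (simp add: abs_mult)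
qed

text \<open>Truncating \<open>y\<^sup>p\<close> to \<open>0 \<le> y \<le> Y\<close> makes it globally Lipschitz.\<close>
definition clipped_power :: "real \<Rightarrow> real \<Rightarrow> real \<Rightarrow> real" where
  "clipped_power Y p y = (max 0 (min y Y)) powr p"

lemma clipped_power_eq: "0 \<le> y \<Longrightarrow> y \<le> Y \<Longrightarrow> clipped_power Y p y = y powr p"
  by (simp add: clipped_power_def)

lemma clipped_power_nonneg: "clipped_power Y p y \<ge> 0"
  by (simp add: clipped_power_def)

lemma continuous_on_clipped_power: "p > 0 \<Longrightarrow> continuous_on S (clipped_power Y p)"
  unfolding clipped_power_def by (intro continuous_on_powr' continuous_intros) auto

lemma clipped_power_lipschitz:
  assumes "p > 1" "0 \<le> Y"
  shows "\<bar>clipped_power Y p x - clipped_power Y p y\<bar> \<le> p * Y powr (p - 1) * \<bar>x - y\<bar>"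
proof -
  let ?c = "\<lambda>x::real. max 0 (min x Y)"
  have "\<bar>?c x powr p - ?c y powr p\<bar> \<le> p * Y powr (p - 1) * \<bar>?c x - ?c y\<bar>"
    using assms by (intro abs_powr_diff_le) auto
  also have "\<dots> \<le> p * Y powr (p - 1) * \<bar>x - y\<bar>"
    using assms by (intro mult_left_mono) auto
  finally show ?thesis by (simp add: clipped_power_def)
qed

lemma exists_small_square: "0 < (c::real) \<Longrightarrow> \<exists>t. 0 < t \<and> t \<le> 1 \<and> t\<^sup>2 \<le> c"
proof (intro exI conjI)
  assume "0 < c"
  show "0 < min 1 (sqrt c)" "min 1 (sqrt c) \<le> 1" using \<open>0 < c\<close> by auto
  have "(min 1 (sqrt c))\<^sup>2 \<le> (sqrt c)\<^sup>2" using \<open>0 < c\<close> by (intro power_mono) auto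
  then show "(min 1 (sqrt c))\<^sup>2 \<le> c" using \<open>0 < c\<close> by simp
qed

lemma le_two_scale_bound:
  fixes f t1 k s C D :: real
  assumes "0 < t1" "2 \<le> k" "0 < s" "0 \<le> C" "0 \<le> D"
    and "s \<le> t1 \<Longrightarrow> f \<le> C * s\<^sup>2" and "t1 \<le> s \<Longrightarrow> f \<le> D"
  shows "f \<le> C * s\<^sup>2 + D / t1\<^sup>2 * (t1 powr (2 - k) * s powr k)"
proof (cases "s \<le> t1")
  case False
  have "t1\<^sup>2 \<le> t1 powr (2 - k) * s powr k"
    using False assms order.trans[OF power_mono square_le_power_scale] by auto
  then have "D \<le> D / t1\<^sup>2 * (t1 powr (2 - k) * s powr k)"
    using assms by (simp add: field_simps mult_left_mono)
  then show ?thesis using False assms by (intro add_increasing) auto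
qed (use assms in \<open>auto intro: add_increasing2\<close>)


section \<open>The Euler-type system and its linearisation\<close>

locale supercritical =
  fixes N :: nat and p :: real
  assumes N_ge_3: "N \<ge> 3" and p_gt_Sobolev: "p > (real N + 2) / (real N - 2)"
begin

text \<open>With \<open>U = \<theta>\<^sup>-\<^sup>\<mu> y\<close> and \<open>Q = \<theta>\<^sup>\<mu>\<^sup>+\<^sup>1 h U'\<close> the equation becomes the Euler-type system
  \<open>\<theta> y' = \<mu> y + Q / h\<close>, \<open>\<theta> Q' = - d Q - h y\<^sup>p\<close>, whose singular equilibrium is
  \<open>(a, -\<mu> a)\<close>; the linearisation there has matrix \<open>[[\<mu>, 1], [-c0, -d]]\<close>, with
  characteristic polynomial \<open>\<lambda>\<^sup>2 + b0 \<lambda> + 2 d\<close> and roots \<open>lam1\<close>, \<open>lam2\<close>.\<close>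
definition "mu = 2 / (p - 1)"
definition "d = real N - 2 - mu"
definition "a = (mu * d) powr (mu / 2)"
definition "c0 = p * a powr (p - 1)"
definition "b0 = d - mu"
definition "lam1 = (- of_real b0 + csqrt (of_real (b0\<^sup>2 - 8 * d))) / 2"
definition "lam2 = (- of_real b0 - csqrt (of_real (b0\<^sup>2 - 8 * d))) / 2"
definition "lam_gap = cmod (lam1 - of_real mu)"
definition "h s = (sin s / s) ^ (N - 1)"

lemma p_gt_1: "p > 1"
proof -
  have "(real N + 2) / (real N - 2) > 1" using N_ge_3 by (simp add: field_simps)
  then show ?thesis using p_gt_Sobolev by linarith
qed

lemma mu_pos: "mu > 0" using p_gt_1 by (simp add: mu_def)

lemma mu_times_p: "mu * p = mu + 2" using p_gt_1 by (simp add: mu_def field_simps)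

lemma two_mu_less: "2 * mu < real N - 2"
proof -
  have "p - 1 > 4 / (real N - 2)"
    using p_gt_Sobolev N_ge_3 by (simp add: field_simps)
  then show ?thesis
    using p_gt_1 N_ge_3 by (simp add: mu_def field_simps)
qed

lemma d_pos: "d > 0" using two_mu_less mu_pos by (simp add: d_def)
lemma b0_pos: "b0 > 0" using two_mu_less by (simp add: b0_def d_def)
lemma a_pos: "a > 0" using mu_pos d_pos by (simp add: a_def)

lemma a_powr_p_minus_1: "a powr (p - 1) = mu * d"
proof -
  have "a powr (p - 1) = (mu * d) powr (mu / 2 * (p - 1))"
    by (simp add: a_def powr_powr)
  also have "mu / 2 * (p - 1) = 1" using p_gt_1 by (simp add: mu_def)
  finally show ?thesis using mu_pos d_pos by simp
qed

lemma a_powr_p: "a powr p = a * (mu * d)"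
  using a_powr_p_minus_1 a_pos powr_add[of a 1 "p - 1"] by simp

lemma c0_eq: "c0 = (mu + 2) * d"
proof -
  have "c0 = (mu * p) * d" by (simp add: c0_def a_powr_p_minus_1 algebra_simps)
  also have "\<dots> = (mu + 2) * d" by (simp only: mu_times_p)
  finally show ?thesis .
qed

lemma c0_pos: "c0 > 0" using d_pos mu_pos by (simp add: c0_eq)

lemma lam1_plus_lam2: "lam1 + lam2 - of_real mu = - of_real d"
  by (simp add: lam1_def lam2_def b0_def field_simps)

lemma lam1_eigen: "(lam1 - of_real mu) * lam1 = - of_real d * (lam1 - of_real mu) - of_real c0"
proof -
  define w where "w = csqrt (of_real (b0\<^sup>2 - 8 * d))"
  have "w * w = of_real (b0\<^sup>2 - 8 * d)" by (simp add: w_def flip: power2_eq_square)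
  have "lam1 * lam1 + of_real b0 * lam1 + of_real (2 * d) = (w * w - of_real (b0\<^sup>2 - 8 * d)) / 4"
    unfolding lam1_def w_def[symmetric] by (simp add: field_simps power2_eq_square)
  with \<open>w * w = _\<close> have "lam1 * lam1 + of_real b0 * lam1 + of_real (2 * d) = 0" by simp
  then show ?thesis by (simp add: c0_eq b0_def algebra_simps)
qed

lemma lam_gap_nonneg: "0 \<le> lam_gap" by (simp add: lam_gap_def)

lemma Re_lam1_nonpos: "Re lam1 \<le> 0"
proof -
  have "Re (csqrt (of_real (b0\<^sup>2 - 8 * d))) \<le> b0"
  proof (cases "b0\<^sup>2 - 8 * d \<ge> 0")
    case True
    then have "Re (csqrt (of_real (b0\<^sup>2 - 8 * d))) = sqrt (b0\<^sup>2 - 8 * d)"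
      by (simp add: csqrt_of_real)
    also have "\<dots> \<le> sqrt (b0\<^sup>2)" using d_pos by (intro real_sqrt_le_mono) auto
    finally show ?thesis using b0_pos by simp
  qed (use b0_pos in simp)
  then show ?thesis by (simp add: lam1_def)
qed

lemma Re_lam2_nonpos: "Re lam2 \<le> 0"
proof -
  define w where "w = csqrt (of_real (b0\<^sup>2 - 8 * d))"
  have "0 \<le> Re w" unfolding w_def by (rule Re_csqrt)
  then show ?thesis using b0_pos unfolding lam2_def w_def[symmetric] by simp
qed

lemma h_pos: "0 < s \<Longrightarrow> s < pi \<Longrightarrow> h s > 0"
  by (simp add: h_def sin_gt_zero)

lemma h_le_1: "0 < s \<Longrightarrow> s < pi \<Longrightarrow> h s \<le> 1"
  unfolding h_def using sin_x_le_x[of s] sin_gt_zero[of s]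
  by (intro power_le_one) auto

lemma continuous_on_h: "continuous_on {0<..<pi} h"
  unfolding h_def by (intro continuous_intros) auto

lemma h_near_1:
  assumes "0 < s" "s \<le> 1" "real (N - 1) * s\<^sup>2 \<le> 1"
  shows "1 - h s \<le> real (N - 1) / 5 * s\<^sup>2" "\<bar>1 / h s - 1\<bar> \<le> real (N - 1) / 5 * s\<^sup>2"
proof -
  have "s\<^sup>2 \<le> 1" using assms by (simp add: power_le_one)
  have "sin s / s \<ge> 1 - s\<^sup>2 / 6"
    using sin_ge_minus_cube_sixth[of s] assms by (simp add: field_simps power2_eq_square power3_eq_cube)
  then have "(sin s / s) ^ (N - 1) \<ge> (1 + (- s\<^sup>2 / 6)) ^ (N - 1)"
    using \<open>s\<^sup>2 \<le> 1\<close> by (intro power_mono) auto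
  moreover have "(1 + (- s\<^sup>2 / 6)) ^ (N - 1) \<ge> 1 + real (N - 1) * (- s\<^sup>2 / 6)"
    using \<open>s\<^sup>2 \<le> 1\<close> by (intro Bernoulli_inequality) simp
  ultimately have lower: "1 - h s \<le> real (N - 1) * s\<^sup>2 / 6" by (simp add: h_def)
  also have "\<dots> \<le> real (N - 1) / 5 * s\<^sup>2" by simp
  finally show "1 - h s \<le> real (N - 1) / 5 * s\<^sup>2" .
  have "s < pi" using assms pi_gt3 by linarith
  then have "h s \<le> 1" "h s \<ge> 5/6" using h_le_1 assms lower by auto
  then have "\<bar>1 / h s - 1\<bar> = (1 - h s) / h s" by (simp add: field_simps)
  also have "\<dots> \<le> (real (N - 1) * s\<^sup>2 / 6) / (5/6)"
    using lower \<open>h s \<le> 1\<close> \<open>h s \<ge> 5/6\<close> by (intro frac_le) auto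
  finally show "\<bar>1 / h s - 1\<bar> \<le> real (N - 1) / 5 * s\<^sup>2" by simp
qed

definition "gain k A B A' B' = (let P = A / (2 - Re lam2) + B / (k - Re lam2) in
   (1 + lam_gap) * ((P + A') / (2 - Re lam1) + (P + B') / (k - Re lam1)) + P)"

lemma gain_scale: "gain k (D * A) (D * B) (D * A') (D * B') = D * gain k A B A' B'"
  by (simp add: gain_def Let_def distrib_left mult.left_commute)

lemma gain_le:
  assumes "0 \<le> A" "0 \<le> B" "0 \<le> A'" "0 \<le> B'" "1 \<le> k" "A + A' \<le> eta" "B + B' \<le> eta * k"
  shows "gain k A B A' B' \<le> (8 + 6 * lam_gap) * eta"
proof -
  have div_le: "x / y \<le> x / z" if "0 \<le> x" "0 < z" "z \<le> y" for x y z :: real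
    using that by (simp add: frac_le)
  have k_pos: "0 < k" using assms(5) by simp
  define P where "P = A / (2 - Re lam2) + B / (k - Re lam2)"
  have "A / (2 - Re lam2) \<le> A / 1" "B / (k - Re lam2) \<le> B / k"
    using assms Re_lam2_nonpos by (intro div_le; simp)+
  moreover have "B / k \<le> eta" "B' / k \<le> eta"
    using assms k_pos by (simp_all add: divide_le_eq)
  ultimately have P: "0 \<le> P" "P \<le> 2 * eta"
    using assms Re_lam2_nonpos unfolding P_def by auto
  have "(P + A') / (2 - Re lam1) \<le> P + A'"
    using div_le[of "P + A'" 1 "2 - Re lam1"] assms P Re_lam1_nonpos by simp
  moreover have "(P + B') / (k - Re lam1) \<le> (P + B') / k"
    using assms P Re_lam1_nonpos k_pos by (intro div_le) auto
  moreover have "P / k \<le> P"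
    using P(1) assms(5) k_pos by (simp add: divide_le_eq mult_le_cancel_left1)
  then have "(P + B') / k \<le> P + eta"
    using \<open>B' / k \<le> eta\<close> by (simp add: add_divide_distrib)
  ultimately have "(P + A') / (2 - Re lam1) + (P + B') / (k - Re lam1) \<le> 6 * eta"
    using P assms by linarith
  then have "(1 + lam_gap) * ((P + A') / (2 - Re lam1) + (P + B') / (k - Re lam1)) \<le> (1 + lam_gap) * (6 * eta)"
    using lam_gap_nonneg by (intro mult_left_mono) auto
  then show ?thesis using P unfolding gain_def P_def[symmetric] Let_def by (simp add: algebra_simps)
qed

definition "eta2 G = euler_inverse lam2 G"
definition "eta1 G g = euler_inverse lam1 (\<lambda>s. eta2 G s + g s)"

text \<open>The solution \<open>z + \<i> R\<close> of the linear system \<open>s z' = \<mu> z + R + Re g\<close>,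
  \<open>s R' = - d R - c0 z + Re (G + (lam1 - \<mu>) g)\<close> vanishing at \<open>0\<close>, assembled from the
  eigencomponents \<open>eta1\<close>, \<open>eta2\<close>.\<close>
definition "linear_solution G g s =
  complex_of_real (Re (eta1 G g s)) + \<i> * complex_of_real (Re (eta2 G s + (lam1 - of_real mu) * eta1 G g s))"

lemma Re_linear_solution: "Re (linear_solution G g s) = Re (eta1 G g s)"
  and Im_linear_solution: "Im (linear_solution G g s) = Re (eta2 G s + (lam1 - of_real mu) * eta1 G g s)"
  by (simp_all add: linear_solution_def)

end

locale linear_forcing = supercritical +
  fixes k b t1 A B A' B' :: real and G g :: "real \<Rightarrow> complex"
  assumes k: "2 \<le> k" and b: "0 < b" and nonneg: "0 \<le> A" "0 \<le> B" "0 \<le> A'" "0 \<le> B'"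
    and G: "two_scale_bounded b t1 k A B G" and g: "two_scale_bounded b t1 k A' B' g"
begin

definition "eta2_bound = A / (2 - Re lam2) + B / (k - Re lam2)"

lemma eta2_bound_nonneg: "0 \<le> eta2_bound" using nonneg k Re_lam2_nonpos by (simp add: eta2_bound_def)

lemma eta2_bounded: "two_scale_bounded b t1 k eta2_bound eta2_bound (eta2 G)"
  unfolding eta2_bound_def eta2_def using Re_lam2_nonpos k b nonneg G by (intro two_scale_bounded_euler_inverse)

lemma eta2_forcing: "euler_forcing lam2 k b A (B * t1 powr (2 - k)) G"
  using Re_lam2_nonpos k b nonneg G by (intro euler_forcing_if_two_scale_bounded)

lemma eta1_forcing: "euler_forcing lam1 k b (eta2_bound + A') ((eta2_bound + B') * t1 powr (2 - k)) (\<lambda>s. eta2 G s + g s)"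
  using Re_lam1_nonpos k b nonneg eta2_bound_nonneg two_scale_bounded_add[OF eta2_bounded g]
  by (intro euler_forcing_if_two_scale_bounded) auto

lemma norm_linear_solution_le:
  assumes s: "s \<in> {0<..b}"
  shows "norm (linear_solution G g s) \<le> gain k A B A' B' * weight t1 k s"
proof -
  have n2: "norm (eta2 G s) \<le> eta2_bound * weight t1 k s"
    unfolding eta2_bound_def eta2_def using Re_lam2_nonpos k b nonneg G s by (intro norm_euler_inverse_le_weight)
  have n1: "norm (eta1 G g s) \<le> ((eta2_bound + A') / (2 - Re lam1) + (eta2_bound + B') / (k - Re lam1)) * weight t1 k s"
    unfolding eta1_def using Re_lam1_nonpos k b nonneg eta2_bound_nonneg two_scale_bounded_add[OF eta2_bounded g] s
    by (intro norm_euler_inverse_le_weight) auto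
  have "norm (linear_solution G g s) \<le> \<bar>Re (eta1 G g s)\<bar> + \<bar>Re (eta2 G s + (lam1 - of_real mu) * eta1 G g s)\<bar>"
    using cmod_le[of "linear_solution G g s"] by (simp add: Re_linear_solution Im_linear_solution)
  also have "\<dots> \<le> norm (eta1 G g s) + (norm (eta2 G s) + lam_gap * norm (eta1 G g s))"
    using abs_Re_le_cmod norm_triangle_ineq[of "eta2 G s" "(lam1 - of_real mu) * eta1 G g s"]
    by (smt (verit) lam_gap_def norm_mult)
  also have "\<dots> = (1 + lam_gap) * norm (eta1 G g s) + norm (eta2 G s)"
    by (simp add: algebra_simps)
  also have "\<dots> \<le> (1 + lam_gap) * (((eta2_bound + A') / (2 - Re lam1) + (eta2_bound + B') / (k - Re lam1)) * weight t1 k s)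
                   + eta2_bound * weight t1 k s"
    using n1 n2 by (intro add_mono mult_left_mono) (auto simp: lam_gap_def)
  also have "\<dots> = gain k A B A' B' * weight t1 k s"
    by (simp add: gain_def Let_def eta2_bound_def[symmetric] distrib_right mult.assoc)
  finally show ?thesis .
qed

lemma
  shows continuous_on_linear_solution: "continuous_on {0<..b} (linear_solution G g)"
    and has_real_derivative_Re_linear_solution: "\<And>s. s \<in> {0<..b} \<Longrightarrow>
      ((\<lambda>s. Re (linear_solution G g s)) has_real_derivative
        (mu * Re (linear_solution G g s) + Im (linear_solution G g s) + Re (g s)) / s) (at s within {0<..b})"
    and has_real_derivative_Im_linear_solution: "\<And>s. s \<in> {0<..b} \<Longrightarrow>
      ((\<lambda>s. Im (linear_solution G g s)) has_real_derivative
        (- d * Im (linear_solution G g s) - c0 * Re (linear_solution G g s) + Re (G s + (lam1 - of_real mu) * g s)) / s)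
        (at s within {0<..b})"
proof -
  interpret F2: euler_forcing lam2 k b A "B * t1 powr (2 - k)" G by (rule eta2_forcing)
  interpret F1: euler_forcing lam1 k b "eta2_bound + A'" "(eta2_bound + B') * t1 powr (2 - k)" "\<lambda>s. eta2 G s + g s"
    by (rule eta1_forcing)
  show "continuous_on {0<..b} (linear_solution G g)"
    unfolding linear_solution_def[abs_def] eta1_def eta2_def
    by (intro continuous_intros F1.euler_inverse_continuous[unfolded eta2_def] F2.euler_inverse_continuous)
  fix s assume s: "s \<in> {0<..b}"
  have D2: "(eta2 G has_vector_derivative (lam2 * eta2 G s + G s) / of_real s) (at s within {0<..b})"
    unfolding eta2_def using s by (rule F2.euler_inverse_has_vector_derivative)
  have D1: "(eta1 G g has_vector_derivative (lam1 * eta1 G g s + (eta2 G s + g s)) / of_real s)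
      (at s within {0<..b})"
    unfolding eta1_def[abs_def] using s by (rule F1.euler_inverse_has_vector_derivative)
  show "((\<lambda>s. Re (linear_solution G g s)) has_real_derivative
        (mu * Re (linear_solution G g s) + Im (linear_solution G g s) + Re (g s)) / s) (at s within {0<..b})"
    unfolding Re_linear_solution Im_linear_solution
    by (rule has_field_derivative_Re[OF D1, THEN DERIV_cong]) (simp add: field_simps)
  have "((\<lambda>s. eta2 G s + (lam1 - of_real mu) * eta1 G g s) has_vector_derivative
      (lam2 * eta2 G s + G s) / of_real s + (lam1 - of_real mu) * ((lam1 * eta1 G g s + (eta2 G s + g s)) / of_real s))
      (at s within {0<..b})"
    by (intro derivative_intros D1 D2)
  moreover have "(lam2 * eta2 G s + G s) + (lam1 - of_real mu) * (lam1 * eta1 G g s + (eta2 G s + g s)) =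
      - of_real d * (eta2 G s + (lam1 - of_real mu) * eta1 G g s) - of_real c0 * eta1 G g s
        + (G s + (lam1 - of_real mu) * g s)" (is "?lhs = ?rhs")
  proof -
    have "?lhs = (lam1 + lam2 - of_real mu) * eta2 G s + ((lam1 - of_real mu) * lam1) * eta1 G g s
        + (G s + (lam1 - of_real mu) * g s)"
      by (simp add: algebra_simps)
    also have "\<dots> = ?rhs"
      unfolding lam1_plus_lam2 lam1_eigen by (simp add: algebra_simps)
    finally show ?thesis .
  qed
  ultimately have "((\<lambda>s. eta2 G s + (lam1 - of_real mu) * eta1 G g s) has_vector_derivative
      (- of_real d * (eta2 G s + (lam1 - of_real mu) * eta1 G g s) - of_real c0 * eta1 G g s
        + (G s + (lam1 - of_real mu) * g s)) / of_real s) (at s within {0<..b})"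
    by (elim has_vector_derivative_eq_rhs) (simp only: times_divide_eq_right add_divide_distrib[symmetric])
  then show "((\<lambda>s. Im (linear_solution G g s)) has_real_derivative
        (- d * Im (linear_solution G g s) - c0 * Re (linear_solution G g s) + Re (G s + (lam1 - of_real mu) * g s)) / s)
        (at s within {0<..b})"
    unfolding Re_linear_solution Im_linear_solution by (rule has_field_derivative_Re[THEN DERIV_cong]) simp
qed

end

lemma (in supercritical) linear_solution_diff:
  assumes "linear_forcing N p k b t1 A B A' B' G g" "linear_forcing N p k b t1 C D C' D' G' g'"
    and s: "s \<in> {0<..b}"
  shows "linear_solution G g s - linear_solution G' g' s =
         linear_solution (\<lambda>s. G s - G' s) (\<lambda>s. g s - g' s) s"
proof -
  interpret F: linear_forcing N p k b t1 A B A' B' G g by fact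
  interpret F': linear_forcing N p k b t1 C D C' D' G' g' by fact
  have eta2_diff: "eta2 G x - eta2 G' x = eta2 (\<lambda>s. G s - G' s) x" if "x \<in> {0<..b}" for x
    unfolding eta2_def using F.eta2_forcing F'.eta2_forcing that by (rule euler_inverse_diff)
  have "eta1 G g s - eta1 G' g' s = euler_inverse lam1 (\<lambda>x. (eta2 G x + g x) - (eta2 G' x + g' x)) s"
    unfolding eta1_def using F.eta1_forcing F'.eta1_forcing s by (rule euler_inverse_diff)
  also have "\<dots> = eta1 (\<lambda>s. G s - G' s) (\<lambda>s. g s - g' s) s"
    unfolding eta1_def using s eta2_diff
    by (intro euler_inverse_cong) (auto simp: algebra_simps)
  finally show ?thesis
    using eta2_diff[OF s] by (simp add: linear_solution_def algebra_simps)
qed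


section \<open>The contraction\<close>

text \<open>Below \<open>t1\<close> the solution stays \<open>delta\<close>-close to the equilibrium and the weight is
  \<open>s\<^sup>2\<close>; beyond \<open>t1\<close> the steep weight \<open>s\<^sup>k\<close> absorbs the crude Lipschitz constants \<open>H\<close> and
  \<open>L\<close>. The condition \<open>shooting\<close> puts the zero of the solution in \<open>(t1, t2)\<close>, and \<open>Y\<close>
  bounds \<open>y\<close> up to that zero.\<close>
locale contraction_setup = supercritical +
  fixes Y t1 t2 k delta r e1 e2 H L F1 F1' F2 F2' :: real
  assumes t1_t2: "0 < t1" "t1 < t2" "t2 < pi"
    and k: "2 \<le> k"
    and delta: "0 < delta" "delta \<le> a / 2" "delta \<le> mu * a / 2"
    and r: "0 < r" "r * t1\<^sup>2 \<le> delta"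
    and nonneg: "0 \<le> e1" "0 \<le> e2" "0 \<le> H" "0 \<le> L" "0 \<le> F1" "0 \<le> F1'" "0 \<le> F2" "0 \<le> F2'"
    and Y: "3 * a / 2 \<le> Y" "pi powr mu * t1 powr (- mu) * (3 * a / 2) \<le> Y"
    and h_near: "\<And>s. s \<in> {0<..t1} \<Longrightarrow> \<bar>1 / h s - 1\<bar> \<le> e1"
    and h_far: "\<And>s. s \<in> {0<..t2} \<Longrightarrow> \<bar>1 / h s - 1\<bar> \<le> H"
    and lipschitz_near: "\<And>s x y. s \<in> {0<..t1} \<Longrightarrow> \<bar>x\<bar> \<le> delta \<Longrightarrow> \<bar>y\<bar> \<le> delta \<Longrightarrow>
       \<bar>(c0 * x - h s * clipped_power Y p (a + x)) - (c0 * y - h s * clipped_power Y p (a + y))\<bar>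
         \<le> e2 * \<bar>x - y\<bar>"
    and lipschitz_far: "\<And>s x y. s \<in> {0<..t2} \<Longrightarrow>
       \<bar>(c0 * x - h s * clipped_power Y p (a + x)) - (c0 * y - h s * clipped_power Y p (a + y))\<bar>
         \<le> L * \<bar>x - y\<bar>"
    and forcing1: "\<And>s. s \<in> {0<..t2} \<Longrightarrow>
       mu * a * \<bar>1 / h s - 1\<bar> \<le> F1 * s\<^sup>2 + F1' * (t1 powr (2 - k) * s powr k)"
    and forcing2: "\<And>s. s \<in> {0<..t2} \<Longrightarrow>
       \<bar>a powr p - h s * clipped_power Y p a\<bar> \<le> F2 * s\<^sup>2 + F2' * (t1 powr (2 - k) * s powr k)"
    and contraction: "gain k (e2 + lam_gap * e1) (L + lam_gap * H) e1 H \<le> 1/2"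
    and small_start: "gain k (F2 + lam_gap * F1) (F2' + lam_gap * F1') F1 F1' \<le> r / 2"
    and shooting: "(cot t1 - cot t2) * (t1 powr d * mu * a / 2) > t1 powr (- mu) * (3 * a / 2)"
begin

text \<open>A point \<open>x = z + \<i> R\<close> encodes \<open>y = a + z\<close> and \<open>Q = R - \<mu> a\<close>; \<open>g1\<close> and \<open>g2\<close> are the
  nonlinear remainders of the two equations of the system, and \<open>G2\<close> is chosen so that
  \<open>Re (G2 + (lam1 - \<mu>) g1) = g2\<close>.\<close>
definition "g1 s (x::complex) = (Im x - mu * a) * (1 / h s - 1)"
definition "g2 s (x::complex) = a powr p + c0 * Re x - h s * clipped_power Y p (a + Re x)"
definition "G2 s x = complex_of_real (g2 s x) - (lam1 - of_real mu) * complex_of_real (g1 s x)"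

abbreviation "w \<equiv> weight t1 k"

text \<open>A function on \<open>(0, t2]\<close> is represented, relative to the weight, by a bounded continuous
  function of \<open>log s\<close>; \<open>T\<close> freezes it for \<open>s \<ge> t2\<close>.\<close>
definition "xi (Phi :: real \<Rightarrow>\<^sub>C complex) s = apply_bcontfun Phi (ln s) * complex_of_real (w s)"
definition "next_xi Phi = linear_solution (\<lambda>s. G2 s (xi Phi s)) (\<lambda>s. complex_of_real (g1 s (xi Phi s)))"
definition "exp_clamp t = exp (min t (ln t2))"
definition "Tf Phi t = next_xi Phi (exp_clamp t) / complex_of_real (w (exp_clamp t))"
definition "T Phi = Bcontfun (Tf Phi)"

lemma t2_pos: "0 < t2" using t1_t2 by simp

lemma h_bounds: "s \<in> {0<..t2} \<Longrightarrow> 0 < h s \<and> h s \<le> 1"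
  using t1_t2 by (auto intro!: h_pos h_le_1)

lemma sin_pos: "s \<in> {0<..t2} \<Longrightarrow> sin s > 0"
  using t1_t2 by (intro sin_gt_zero) auto

lemma continuous_on_h_t2: "continuous_on {0<..t2} h"
  by (rule continuous_on_subset[OF continuous_on_h]) (use t1_t2 in auto)

lemma continuous_on_g1: "continuous_on {0<..t2} f \<Longrightarrow> continuous_on {0<..t2} (\<lambda>s. g1 s (f s))"
  unfolding g1_def using h_bounds
  by (intro continuous_intros continuous_on_h_t2) (auto simp: less_imp_neq[symmetric])

lemma continuous_on_G2: "continuous_on {0<..t2} f \<Longrightarrow> continuous_on {0<..t2} (\<lambda>s. G2 s (f s))"
  unfolding G2_def g2_def using p_gt_1
  by (intro continuous_intros continuous_on_g1 continuous_on_h_t2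
        continuous_on_compose2[OF continuous_on_clipped_power[of p UNIV]]) auto

lemma continuous_on_xi: "continuous_on {0<..t2} (xi Phi)"
  unfolding xi_def
  by (intro continuous_intros continuous_on_compose2[OF continuous_on_apply_bcontfun[of UNIV Phi]]
        continuous_on_subset[OF continuous_on_weight]) auto

lemma norm_xi_le: "s > 0 \<Longrightarrow> norm (xi Phi s) \<le> norm Phi * w s"
  unfolding xi_def using weight_pos[of s t1 k] norm_bounded[of Phi "ln s"]
  by (simp add: norm_mult mult_right_mono)

lemma norm_xi_diff_le: "s > 0 \<Longrightarrow> norm (xi Phi s - xi Psi s) \<le> dist Phi Psi * w s"
  unfolding xi_def using weight_pos[of s t1 k] dist_bounded[of Phi "ln s" Psi]
  by (simp add: left_diff_distrib[symmetric] norm_mult dist_norm mult_right_mono)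

lemma norm_xi_le_delta: "norm Phi \<le> r \<Longrightarrow> s \<in> {0<..t1} \<Longrightarrow> norm (xi Phi s) \<le> delta"
  using norm_xi_le[of s Phi] weight_eq_square[of s t1 k] k r
    mult_mono[of "norm Phi" r "s\<^sup>2" "t1\<^sup>2"] power_mono[of s t1 2]
  by auto

lemma g1_lipschitz: "\<bar>g1 s x - g1 s y\<bar> \<le> \<bar>1 / h s - 1\<bar> * cmod (x - y)"
proof -
  have "\<bar>g1 s x - g1 s y\<bar> = \<bar>Im (x - y)\<bar> * \<bar>1 / h s - 1\<bar>"
    by (simp add: g1_def left_diff_distrib[symmetric] abs_mult)
  then show ?thesis
    using mult_right_mono[OF abs_Im_le_cmod[of "x - y"], of "\<bar>1 / h s - 1\<bar>"] by (simp add: mult.commute)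
qed

lemma g2_diff: "g2 s x - g2 s y =
   (c0 * Re x - h s * clipped_power Y p (a + Re x)) - (c0 * Re y - h s * clipped_power Y p (a + Re y))"
  by (simp add: g2_def)

lemma norm_G2_diff_le: "norm (G2 s x - G2 s y) \<le> \<bar>g2 s x - g2 s y\<bar> + lam_gap * \<bar>g1 s x - g1 s y\<bar>"
proof -
  have "G2 s x - G2 s y = of_real (g2 s x - g2 s y) - (lam1 - of_real mu) * of_real (g1 s x - g1 s y)"
    by (simp add: G2_def algebra_simps)
  then show ?thesis
    using norm_triangle_ineq4[of "of_real (g2 s x - g2 s y)" "(lam1 - of_real mu) * of_real (g1 s x - g1 s y)"]
    by (simp add: norm_mult lam_gap_def del: of_real_diff)
qed

lemma G2_lipschitz:
  assumes "\<bar>g2 s x - g2 s y\<bar> \<le> L' * cmod (x - y)" "\<bar>1 / h s - 1\<bar> \<le> H'" "0 \<le> H'"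
  shows "norm (G2 s x - G2 s y) \<le> (L' + lam_gap * H') * cmod (x - y)"
proof -
  have g1: "\<bar>g1 s x - g1 s y\<bar> \<le> H' * cmod (x - y)"
    using g1_lipschitz[of s x y] mult_right_mono[OF assms(2), of "cmod (x - y)"] by simp
  have "norm (G2 s x - G2 s y) \<le> L' * cmod (x - y) + lam_gap * (H' * cmod (x - y))"
    using order.trans[OF norm_G2_diff_le add_mono[OF assms(1) mult_left_mono[OF g1 lam_gap_nonneg]]] .
  then show ?thesis by (simp add: algebra_simps)
qed

lemma G2_lipschitz_far:
  assumes "s \<in> {0<..t2}"
  shows "norm (G2 s x - G2 s y) \<le> (L + lam_gap * H) * cmod (x - y)"
proof (rule G2_lipschitz[OF _ h_far[OF assms] nonneg(3)])
  have "\<bar>g2 s x - g2 s y\<bar> \<le> L * \<bar>Re x - Re y\<bar>"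
    unfolding g2_diff by (rule lipschitz_far[OF assms])
  also have "\<dots> \<le> L * cmod (x - y)"
    using abs_Re_le_cmod[of "x - y"] nonneg by (intro mult_left_mono) auto
  finally show "\<bar>g2 s x - g2 s y\<bar> \<le> L * cmod (x - y)" .
qed

lemma G2_lipschitz_near:
  assumes "s \<in> {0<..t1}" "cmod x \<le> delta" "cmod y \<le> delta"
  shows "norm (G2 s x - G2 s y) \<le> (e2 + lam_gap * e1) * cmod (x - y)"
proof (rule G2_lipschitz[OF _ h_near[OF assms(1)] nonneg(1)])
  have "\<bar>g2 s x - g2 s y\<bar> \<le> e2 * \<bar>Re x - Re y\<bar>"
    unfolding g2_diff using assms abs_Re_le_cmod[of x] abs_Re_le_cmod[of y]
    by (intro lipschitz_near) auto
  also have "\<dots> \<le> e2 * cmod (x - y)"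
    using abs_Re_le_cmod[of "x - y"] nonneg by (intro mult_left_mono) auto
  finally show "\<bar>g2 s x - g2 s y\<bar> \<le> e2 * cmod (x - y)" .
qed

lemma abs_g1_0: "s \<in> {0<..t2} \<Longrightarrow> \<bar>g1 s 0\<bar> \<le> F1 * s\<^sup>2 + F1' * (t1 powr (2 - k) * s powr k)"
  using forcing1[of s] mu_pos a_pos by (simp add: g1_def abs_mult)

lemma norm_G2_0:
  assumes "s \<in> {0<..t2}"
  shows "norm (G2 s 0) \<le> (F2 + lam_gap * F1) * s\<^sup>2 + (F2' + lam_gap * F1') * (t1 powr (2 - k) * s powr k)"
proof -
  have "norm (G2 s 0) \<le> \<bar>g2 s 0\<bar> + lam_gap * \<bar>g1 s 0\<bar>"
    using norm_triangle_ineq4[of "of_real (g2 s 0)" "(lam1 - of_real mu) * of_real (g1 s 0)"]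
    by (simp add: G2_def norm_mult lam_gap_def)
  also have "\<dots> \<le> (F2 * s\<^sup>2 + F2' * (t1 powr (2 - k) * s powr k))
                 + lam_gap * (F1 * s\<^sup>2 + F1' * (t1 powr (2 - k) * s powr k))"
    using forcing2[OF assms] abs_g1_0[OF assms] lam_gap_nonneg
    by (intro add_mono mult_left_mono) (auto simp: g2_def)
  finally show ?thesis by (simp add: algebra_simps)
qed

lemma norm_xi_le_sum: "s > 0 \<Longrightarrow> norm (xi Phi s) \<le> norm Phi * (s\<^sup>2 + t1 powr (2 - k) * s powr k)"
  using order.trans[OF norm_xi_le[of s Phi] mult_left_mono[OF weight_le_sum[of s t1 k]]] by simp

lemma G2_xi_bounded:
  "two_scale_bounded t2 t1 k (F2 + lam_gap * F1 + (L + lam_gap * H) * norm Phi)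
     (F2' + lam_gap * F1' + (L + lam_gap * H) * norm Phi) (\<lambda>s. G2 s (xi Phi s))"
proof (rule two_scale_boundedI[OF continuous_on_G2[OF continuous_on_xi]])
  fix s assume s: "s \<in> {0<..t2}"
  have "norm (G2 s (xi Phi s) - G2 s 0) \<le> (L + lam_gap * H) * norm (xi Phi s)"
    using G2_lipschitz_far[OF s, of "xi Phi s" 0] by simp
  also have "\<dots> \<le> (L + lam_gap * H) * (norm Phi * (s\<^sup>2 + t1 powr (2 - k) * s powr k))"
    using norm_xi_le_sum[of s Phi] s nonneg lam_gap_nonneg by (intro mult_left_mono) auto
  finally show "norm (G2 s (xi Phi s)) \<le> (F2 + lam_gap * F1 + (L + lam_gap * H) * norm Phi) * s\<^sup>2 +
      (F2' + lam_gap * F1' + (L + lam_gap * H) * norm Phi) * (t1 powr (2 - k) * s powr k)"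
    using norm_G2_0[OF s] norm_triangle_ineq[of "G2 s 0" "G2 s (xi Phi s) - G2 s 0"]
    by (simp add: algebra_simps)
qed

lemma g1_xi_bounded:
  "two_scale_bounded t2 t1 k (F1 + H * norm Phi) (F1' + H * norm Phi)
     (\<lambda>s. complex_of_real (g1 s (xi Phi s)))"
proof (rule two_scale_boundedI)
  show "continuous_on {0<..t2} (\<lambda>s. complex_of_real (g1 s (xi Phi s)))"
    by (intro continuous_intros continuous_on_g1 continuous_on_xi)
  fix s assume s: "s \<in> {0<..t2}"
  have "\<bar>g1 s (xi Phi s) - g1 s 0\<bar> \<le> H * norm (xi Phi s)"
    using order.trans[OF g1_lipschitz mult_right_mono[OF h_far[OF s]], of "xi Phi s" 0] by simp
  also have "\<dots> \<le> H * (norm Phi * (s\<^sup>2 + t1 powr (2 - k) * s powr k))"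
    using norm_xi_le_sum[of s Phi] s nonneg by (intro mult_left_mono) auto
  finally show "norm (complex_of_real (g1 s (xi Phi s))) \<le>
      (F1 + H * norm Phi) * s\<^sup>2 + (F1' + H * norm Phi) * (t1 powr (2 - k) * s powr k)"
    using abs_g1_0[OF s] by (simp add: algebra_simps)
qed

lemma norm_xi_diff_two_scale:
  assumes s: "s \<in> {0<..t2}"
  shows "s \<le> t1 \<Longrightarrow> norm (xi Phi s - xi Psi s) \<le> dist Phi Psi * s\<^sup>2"
    and "t1 \<le> s \<Longrightarrow> norm (xi Phi s - xi Psi s) \<le> dist Phi Psi * (t1 powr (2 - k) * s powr k)"
  using norm_xi_diff_le[of s Phi Psi] s weight_eq_square[of s t1 k] weight_eq_power[of t1 s k] t1_t2 k
  by auto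

lemma G2_xi_diff_bounded:
  assumes "norm Phi \<le> r" "norm Psi \<le> r"
  shows "two_scale_bounded t2 t1 k (dist Phi Psi * (e2 + lam_gap * e1)) (dist Phi Psi * (L + lam_gap * H))
           (\<lambda>s. G2 s (xi Phi s) - G2 s (xi Psi s))"
proof (rule two_scale_boundedI)
  show "continuous_on {0<..t2} (\<lambda>s. G2 s (xi Phi s) - G2 s (xi Psi s))"
    by (intro continuous_intros continuous_on_G2 continuous_on_xi)
  fix s assume s: "s \<in> {0<..t2}"
  have "0 \<le> e2 + lam_gap * e1" "0 \<le> L + lam_gap * H" using nonneg lam_gap_nonneg by auto
  have near: "norm (G2 s (xi Phi s) - G2 s (xi Psi s)) \<le> (e2 + lam_gap * e1) * (dist Phi Psi * s\<^sup>2)"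
    if "s \<le> t1"
    using order.trans[OF G2_lipschitz_near mult_left_mono[OF norm_xi_diff_two_scale(1)]]
      norm_xi_le_delta assms s that \<open>0 \<le> e2 + lam_gap * e1\<close> by simp
  have far: "norm (G2 s (xi Phi s) - G2 s (xi Psi s)) \<le>
      (L + lam_gap * H) * (dist Phi Psi * (t1 powr (2 - k) * s powr k))" if "t1 \<le> s"
    using order.trans[OF G2_lipschitz_far mult_left_mono[OF norm_xi_diff_two_scale(2)]]
      s that \<open>0 \<le> L + lam_gap * H\<close> by simp
  show "norm (G2 s (xi Phi s) - G2 s (xi Psi s)) \<le>
      dist Phi Psi * (e2 + lam_gap * e1) * s\<^sup>2 + dist Phi Psi * (L + lam_gap * H) * (t1 powr (2 - k) * s powr k)"
  proof (cases "s \<le> t1")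
    case True
    have "0 \<le> dist Phi Psi * (L + lam_gap * H) * (t1 powr (2 - k) * s powr k)"
      using \<open>0 \<le> L + lam_gap * H\<close> by simp
    then show ?thesis using near[OF True] by (simp add: algebra_simps)
  next
    case False
    have "0 \<le> dist Phi Psi * (e2 + lam_gap * e1) * s\<^sup>2"
      using \<open>0 \<le> e2 + lam_gap * e1\<close> by simp
    then show ?thesis using far False by (simp add: algebra_simps)
  qed
qed

lemma g1_xi_diff_bounded:
  "two_scale_bounded t2 t1 k (dist Phi Psi * e1) (dist Phi Psi * H)
     (\<lambda>s. complex_of_real (g1 s (xi Phi s)) - complex_of_real (g1 s (xi Psi s)))"
proof (rule two_scale_boundedI)
  show "continuous_on {0<..t2} (\<lambda>s. complex_of_real (g1 s (xi Phi s)) - complex_of_real (g1 s (xi Psi s)))"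
    by (intro continuous_intros continuous_on_g1 continuous_on_xi)
  fix s assume s: "s \<in> {0<..t2}"
  have near: "\<bar>g1 s (xi Phi s) - g1 s (xi Psi s)\<bar> \<le> e1 * (dist Phi Psi * s\<^sup>2)" if "s \<le> t1"
    using order.trans[OF g1_lipschitz mult_mono[OF h_near norm_xi_diff_two_scale(1)]] s that nonneg by simp
  have far: "\<bar>g1 s (xi Phi s) - g1 s (xi Psi s)\<bar> \<le> H * (dist Phi Psi * (t1 powr (2 - k) * s powr k))"
    if "t1 \<le> s"
    using order.trans[OF g1_lipschitz mult_mono[OF h_far norm_xi_diff_two_scale(2)]] s that nonneg by simp
  show "norm (complex_of_real (g1 s (xi Phi s)) - complex_of_real (g1 s (xi Psi s))) \<le>
      dist Phi Psi * e1 * s\<^sup>2 + dist Phi Psi * H * (t1 powr (2 - k) * s powr k)"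
  proof (cases "s \<le> t1")
    case True
    have "0 \<le> dist Phi Psi * H * (t1 powr (2 - k) * s powr k)" using nonneg by simp
    then show ?thesis using near[OF True] by (simp add: algebra_simps flip: of_real_diff)
  next
    case False
    have "0 \<le> dist Phi Psi * e1 * s\<^sup>2" using nonneg by simp
    then show ?thesis using far False by (simp add: algebra_simps flip: of_real_diff)
  qed
qed

lemma next_xi_linear_forcing:
  "linear_forcing N p k t2 t1
     (F2 + lam_gap * F1 + (L + lam_gap * H) * norm Phi) (F2' + lam_gap * F1' + (L + lam_gap * H) * norm Phi)
     (F1 + H * norm Phi) (F1' + H * norm Phi)
     (\<lambda>s. G2 s (xi Phi s)) (\<lambda>s. complex_of_real (g1 s (xi Phi s)))"
  using k t2_pos nonneg lam_gap_nonneg G2_xi_bounded g1_xi_bounded by unfold_locales auto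

lemma continuous_on_next_xi: "continuous_on {0<..t2} (next_xi Phi)"
  unfolding next_xi_def by (rule linear_forcing.continuous_on_linear_solution[OF next_xi_linear_forcing])

lemma next_xi_le_weight: "\<exists>K. \<forall>s\<in>{0<..t2}. norm (next_xi Phi s) \<le> K * w s"
  unfolding next_xi_def using linear_forcing.norm_linear_solution_le[OF next_xi_linear_forcing] by blast

lemma norm_next_xi_diff_le:
  assumes "norm Phi \<le> r" "norm Psi \<le> r" and s: "s \<in> {0<..t2}"
  shows "norm (next_xi Phi s - next_xi Psi s) \<le> dist Phi Psi / 2 * w s"
proof -
  let ?D = "dist Phi Psi"
  have diff: "linear_forcing N p k t2 t1 (?D * (e2 + lam_gap * e1)) (?D * (L + lam_gap * H)) (?D * e1) (?D * H)
      (\<lambda>s. G2 s (xi Phi s) - G2 s (xi Psi s))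
      (\<lambda>s. complex_of_real (g1 s (xi Phi s)) - complex_of_real (g1 s (xi Psi s)))"
    using k t2_pos nonneg lam_gap_nonneg G2_xi_diff_bounded[OF assms(1,2)] g1_xi_diff_bounded
    by unfold_locales auto
  have "norm (next_xi Phi s - next_xi Psi s) \<le>
      gain k (?D * (e2 + lam_gap * e1)) (?D * (L + lam_gap * H)) (?D * e1) (?D * H) * w s"
    unfolding next_xi_def
      linear_solution_diff[OF next_xi_linear_forcing next_xi_linear_forcing s]
    using linear_forcing.norm_linear_solution_le[OF diff s] .
  also have "\<dots> \<le> ?D * (1/2) * w s"
    unfolding gain_scale using contraction weight_pos[of s t1 k] s
    by (intro mult_right_mono mult_left_mono) auto
  finally show ?thesis by simp
qed

lemma norm_next_xi_0_le:
  assumes s: "s \<in> {0<..t2}" shows "norm (next_xi 0 s) \<le> r / 2 * w s"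
proof -
  have "norm (next_xi 0 s) \<le> gain k (F2 + lam_gap * F1) (F2' + lam_gap * F1') F1 F1' * w s"
    using linear_forcing.norm_linear_solution_le[OF next_xi_linear_forcing[of 0] s]
    by (simp add: next_xi_def)
  also have "\<dots> \<le> r / 2 * w s"
    using small_start weight_pos[of s t1 k] s by (intro mult_right_mono) auto
  finally show ?thesis .
qed

lemma exp_clamp_mem: "exp_clamp t \<in> {0<..t2}"
proof -
  have "exp (min t (ln t2)) \<le> exp (ln t2)" by simp
  then show ?thesis using t2_pos by (simp add: exp_clamp_def)
qed

lemma exp_clamp_ln: "s \<in> {0<..t2} \<Longrightarrow> exp_clamp (ln s) = s"
  by (simp add: exp_clamp_def min_def)

lemma Tf_bcontfun: "Tf Phi \<in> bcontfun"
proof -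
  have "continuous_on UNIV (\<lambda>t. next_xi Phi (exp_clamp t))" "continuous_on UNIV (\<lambda>t. w (exp_clamp t))"
    using exp_clamp_mem unfolding exp_clamp_def[abs_def]
    by (intro continuous_on_compose2[OF continuous_on_next_xi] continuous_on_compose2[OF continuous_on_weight]
          continuous_intros; force)+
  moreover have "w (exp_clamp t) > 0" for t using weight_pos exp_clamp_mem by auto
  ultimately have "continuous_on UNIV (Tf Phi)"
    unfolding Tf_def[abs_def] by (intro continuous_intros) (auto simp: less_imp_neq[symmetric])
  moreover obtain K where K: "\<forall>s\<in>{0<..t2}. norm (next_xi Phi s) \<le> K * w s"
    using next_xi_le_weight by blast
  then have "norm (Tf Phi t) \<le> K" for t
    using exp_clamp_mem[of t] \<open>w (exp_clamp t) > 0\<close> by (simp add: Tf_def norm_divide divide_le_eq)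
  ultimately show ?thesis by (auto simp: bcontfun_def bounded_iff)
qed

lemma T_apply: "apply_bcontfun (T Phi) = Tf Phi"
  unfolding T_def using Tf_bcontfun by (simp add: Bcontfun_inverse)

lemma dist_Tf_le:
  assumes "norm Phi \<le> r" "norm Psi \<le> r"
  shows "dist (Tf Phi t) (Tf Psi t) \<le> dist Phi Psi / 2"
  using norm_next_xi_diff_le[OF assms exp_clamp_mem] weight_pos[of "exp_clamp t" t1 k] exp_clamp_mem[of t]
  by (simp add: Tf_def dist_norm norm_divide diff_divide_distrib[symmetric] divide_le_eq)

lemma norm_Tf_0_le: "norm (Tf 0 t) \<le> r / 2"
  using norm_next_xi_0_le[OF exp_clamp_mem] weight_pos[of "exp_clamp t" t1 k] exp_clamp_mem[of t]
  by (simp add: Tf_def norm_divide divide_le_eq)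

lemma fixed_point_exists: "\<exists>Phi. norm Phi \<le> r \<and> T Phi = Phi"
proof -
  have "\<exists>!x\<in>cball 0 r. T x = x"
  proof (rule Banach_fix[where c="1/2"])
    show "T ` cball 0 r \<subseteq> cball 0 r"
    proof clarsimp
      fix Phi :: "real \<Rightarrow>\<^sub>C complex" assume Phi: "norm Phi \<le> r"
      have "norm (Tf Phi t) \<le> r" for t
        using Phi dist_Tf_le[OF Phi, of 0 t] norm_Tf_0_le[of t] norm_triangle_ineq2[of "Tf Phi t" "Tf 0 t"] r
        by (simp add: dist_norm)
      then show "norm (T Phi) \<le> r" by (intro norm_bound) (simp add: T_apply)
    qed
    show "dist (T x) (T y) \<le> 1 / 2 * dist x y" if "x \<in> cball 0 r" "y \<in> cball 0 r" for x y
      using that dist_Tf_le[of x y] by (intro dist_bound) (auto simp: T_apply)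
  qed (use r in \<open>auto simp: complete_eq_closed\<close>)
  then show ?thesis by auto
qed


section \<open>The singular solution\<close>

definition "fixed_xi = (SOME Phi. norm Phi \<le> r \<and> T Phi = Phi)"

lemma fixed_xi: "norm fixed_xi \<le> r" "T fixed_xi = fixed_xi"
  using someI_ex[OF fixed_point_exists] by (auto simp: fixed_xi_def)

lemma next_xi_fixed_xi: "s \<in> {0<..t2} \<Longrightarrow> next_xi fixed_xi s = xi fixed_xi s"
  using fun_cong[OF arg_cong[OF fixed_xi(2), of apply_bcontfun], of "ln s"] weight_pos[of s t1 k]
  by (simp add: T_apply Tf_def exp_clamp_ln xi_def divide_eq_eq)

definition "ysol s = a + Re (next_xi fixed_xi s)"
definition "Qsol s = Im (next_xi fixed_xi s) - mu * a"
definition "Ssol s = s powr d * Qsol s"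
definition "Usol s = s powr (- mu) * ysol s"
definition "dUsol s = Ssol s / sin s ^ (N - 1)"
text \<open>\<open>ddUsol\<close> is \<open>U''\<close> read off from the equation, with the truncated nonlinearity.\<close>
definition "ddUsol s = - (s powr (- mu - 2)) * clipped_power Y p (ysol s) - (real N - 1) * (cos s / sin s) * dUsol s"

lemma ysol_has_derivative:
  assumes s: "s \<in> {0<..t2}"
  shows "(ysol has_real_derivative (mu * ysol s + Qsol s / h s) / s) (at s within {0<..t2})"
proof -
  have "((\<lambda>s. Re (next_xi fixed_xi s)) has_real_derivative
      (mu * Re (next_xi fixed_xi s) + Im (next_xi fixed_xi s) + g1 s (xi fixed_xi s)) / s) (at s within {0<..t2})"
    using linear_forcing.has_real_derivative_Re_linear_solution[OF next_xi_linear_forcing s]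
    by (simp add: next_xi_def)
  then have "((\<lambda>s. a + Re (next_xi fixed_xi s)) has_real_derivative
      (mu * Re (next_xi fixed_xi s) + Im (next_xi fixed_xi s) + g1 s (xi fixed_xi s)) / s) (at s within {0<..t2})"
    using DERIV_add[OF DERIV_const] by fastforce
  moreover have "h s > 0" using h_bounds s by auto
  ultimately show ?thesis
    unfolding ysol_def[abs_def] Qsol_def
    by (elim DERIV_cong) (simp add: g1_def next_xi_fixed_xi[OF s, symmetric] field_simps)
qed

lemma Qsol_has_derivative:
  assumes s: "s \<in> {0<..t2}"
  shows "(Qsol has_real_derivative (- d * Qsol s - h s * clipped_power Y p (ysol s)) / s) (at s within {0<..t2})"
proof -
  have "((\<lambda>s. Im (next_xi fixed_xi s)) has_real_derivative
      (- d * Im (next_xi fixed_xi s) - c0 * Re (next_xi fixed_xi s) + g2 s (xi fixed_xi s)) / s)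
      (at s within {0<..t2})"
    using linear_forcing.has_real_derivative_Im_linear_solution[OF next_xi_linear_forcing s]
    by (simp add: next_xi_def G2_def)
  then have "((\<lambda>s. Im (next_xi fixed_xi s) - mu * a) has_real_derivative
      (- d * Im (next_xi fixed_xi s) - c0 * Re (next_xi fixed_xi s) + g2 s (xi fixed_xi s)) / s)
      (at s within {0<..t2})"
    using DERIV_diff[OF _ DERIV_const] by fastforce
  then show ?thesis
    unfolding Qsol_def[abs_def] ysol_def
    by (elim DERIV_cong) (simp add: g2_def next_xi_fixed_xi[OF s, symmetric] a_powr_p algebra_simps)
qed

lemma power_eq_powr: "s > 0 \<Longrightarrow> s ^ (N - 1) = s powr (real N - 1)"
  using N_ge_3 by (simp add: powr_realpow[symmetric] of_nat_diff)

lemma Usol_has_derivative: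
  assumes s: "s \<in> {0<..t2}"
  shows "(Usol has_real_derivative dUsol s) (at s within {0<..t2})"
proof -
  have sp: "s > 0" using s by auto
  have hp: "h s > 0" using h_bounds s by auto
  have fe: "(\<lambda>s. s powr (- mu) * ysol s) = Usol" by (rule ext) (simp add: Usol_def)
  have D: "((\<lambda>s. s powr (- mu) * ysol s) has_real_derivative
      (s powr (- mu) * ((mu * ysol s + Qsol s / h s) / s) + (- mu * s powr (- mu - 1)) * ysol s)) (at s within {0<..t2})"
    using DERIV_mult'[OF has_field_derivative_at_within[OF has_real_derivative_powr[OF sp, of "- mu"]] ysol_has_derivative[OF s]]
    by (simp add: algebra_simps)
  have E: "s powr (- mu) * ((mu * ysol s + Qsol s / h s) / s) + (- mu * s powr (- mu - 1)) * ysol s = dUsol s"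
  proof -
    have e1: "s powr (- mu) / s = s powr (- mu - 1)" using sp by (simp add: powr_diff)
    have e2: "s powr (- mu - 1) / h s = s powr d / (sin s) ^ (N - 1)"
    proof -
      have hh: "h s = (sin s) ^ (N - 1) / s ^ (N - 1)" by (simp add: h_def power_divide)
      have pp: "s powr (- mu - 1) * s ^ (N - 1) = s powr d"
        using sp power_eq_powr[OF sp] by (simp add: powr_add[symmetric] d_def algebra_simps)
      have "s powr (- mu - 1) / h s = s powr (- mu - 1) * s ^ (N - 1) / (sin s) ^ (N - 1)"
        unfolding hh by simp
      then show ?thesis unfolding pp .
    qed
    have "s powr (- mu) * ((mu * ysol s + Qsol s / h s) / s) + (- mu * s powr (- mu - 1)) * ysol s
        = (s powr (- mu) / s) * (mu * ysol s + Qsol s / h s) - mu * s powr (- mu - 1) * ysol s"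
      using sp by (simp add: field_simps)
    also have "\<dots> = Qsol s * (s powr (- mu - 1) / h s)" unfolding e1 using hp by (simp add: field_simps)
    also have "\<dots> = dUsol s" unfolding e2 by (simp add: dUsol_def Ssol_def)
    finally show ?thesis .
  qed
  show ?thesis by (rule DERIV_cong[OF D[unfolded fe] E])
qed

lemma Ssol_has_derivative:
  assumes s: "s \<in> {0<..t2}"
  shows "(Ssol has_real_derivative - (s powr (d - 1) * h s * clipped_power Y p (ysol s))) (at s within {0<..t2})"
proof -
  have sp: "s > 0" using s by auto
  have fe: "(\<lambda>s. s powr d * Qsol s) = Ssol" by (rule ext) (simp add: Ssol_def)
  have D: "((\<lambda>s. s powr d * Qsol s) has_real_derivative
      (s powr d * ((- d * Qsol s - h s * clipped_power Y p (ysol s)) / s) + (d * s powr (d - 1)) * Qsol s)) (at s within {0<..t2})"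
    using DERIV_mult'[OF has_field_derivative_at_within[OF has_real_derivative_powr[OF sp, of d]] Qsol_has_derivative[OF s]]
    by (simp add: algebra_simps)
  have e1: "s powr d / s = s powr (d - 1)" using sp by (simp add: powr_diff)
  have E: "s powr d * ((- d * Qsol s - h s * clipped_power Y p (ysol s)) / s) + (d * s powr (d - 1)) * Qsol s
      = - (s powr (d - 1) * h s * clipped_power Y p (ysol s))"
  proof -
    have "s powr d * ((- d * Qsol s - h s * clipped_power Y p (ysol s)) / s) = (s powr d / s) * (- d * Qsol s - h s * clipped_power Y p (ysol s))"
      by simp
    then show ?thesis unfolding e1 by (simp add: algebra_simps)
  qed
  show ?thesis by (rule DERIV_cong[OF D[unfolded fe] E])
qed

lemma dUsol_has_derivative:
  assumes s: "s \<in> {0<..t2}"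
  shows "(dUsol has_real_derivative ddUsol s) (at s within {0<..t2})"
proof -
  have sp: "s > 0" using s by auto
  have sn: "sin s > 0" using sin_pos s by auto
  have hp: "h s > 0" using h_bounds s by auto
  have fe: "(\<lambda>s. Ssol s / (sin s) ^ (N - 1)) = dUsol" by (rule ext) (simp add: dUsol_def)
  have Dp: "((\<lambda>s. (sin s) ^ (N - 1)) has_real_derivative (real (N - 1) * (sin s) ^ (N - 2) * cos s)) (at s within {0<..t2})"
  proof -
    have n2: "N - 1 - Suc 0 = N - 2" by simp
    show ?thesis
      using DERIV_power[where n="N - 1", OF has_field_derivative_at_within[OF DERIV_sin[of s]]]
      unfolding n2 by (simp add: algebra_simps)
  qed
  have D: "((\<lambda>s. Ssol s / (sin s) ^ (N - 1)) has_real_derivative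
     ((- (s powr (d - 1) * h s * clipped_power Y p (ysol s))) * (sin s) ^ (N - 1) - Ssol s * (real (N - 1) * (sin s) ^ (N - 2) * cos s))
        / ((sin s) ^ (N - 1) * (sin s) ^ (N - 1))) (at s within {0<..t2})"
    by (rule DERIV_divide[OF Ssol_has_derivative[OF s] Dp]) (use sn in simp)
  define P where "P = (sin s) ^ (N - 2)"
  have P: "P > 0" using sn by (simp add: P_def)
  have sP: "(sin s) ^ (N - 1) = sin s * P"
    using N_ge_3 by (simp add: P_def power_Suc[symmetric] Suc_diff_Suc numeral_2_eq_2)
  have hh: "h s * s ^ (N - 1) = (sin s) ^ (N - 1)"
    using sp by (simp add: h_def power_divide)
  have pw: "s powr (d - 1) = s powr (- mu - 2) * s ^ (N - 1)"
    using sp power_eq_powr[OF sp] by (simp add: powr_add[symmetric] d_def algebra_simps)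
  have key: "s powr (d - 1) * h s = s powr (- mu - 2) * (sin s) ^ (N - 1)"
    unfolding pw hh[symmetric] by (simp add: algebra_simps)
  have nn: "real N - 1 = real (N - 1)" using N_ge_3 by (simp add: of_nat_diff)
  have E: "((- (s powr (d - 1) * h s * clipped_power Y p (ysol s))) * (sin s) ^ (N - 1) - Ssol s * (real (N - 1) * (sin s) ^ (N - 2) * cos s))
        / ((sin s) ^ (N - 1) * (sin s) ^ (N - 1)) = ddUsol s"
    unfolding ddUsol_def dUsol_def key unfolding sP P_def[symmetric] nn
    using sn P by (simp add: field_simps power2_eq_square)
  show ?thesis by (rule DERIV_cong[OF D[unfolded fe] E])
qed

lemma deviation_le:
  assumes s: "s \<in> {0<..t1}"
  shows "\<bar>ysol s - a\<bar> \<le> r * s\<^sup>2" "\<bar>Qsol s + mu * a\<bar> \<le> r * s\<^sup>2"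
proof -
  have "s \<in> {0<..t2}" using s t1_t2 by auto
  have "norm (next_xi fixed_xi s) \<le> r * s\<^sup>2"
    using norm_xi_le[of s fixed_xi] fixed_xi(1) weight_eq_square[of s t1 k] s k
    by (auto simp: next_xi_fixed_xi[OF \<open>s \<in> {0<..t2}\<close>] intro: order.trans mult_right_mono)
  then show "\<bar>ysol s - a\<bar> \<le> r * s\<^sup>2" "\<bar>Qsol s + mu * a\<bar> \<le> r * s\<^sup>2"
    using abs_Re_le_cmod[of "next_xi fixed_xi s"] abs_Im_le_cmod[of "next_xi fixed_xi s"]
    by (auto simp: ysol_def Qsol_def)
qed

lemma deviation_le_delta:
  assumes "s \<in> {0<..t1}" shows "\<bar>ysol s - a\<bar> \<le> delta" "\<bar>Qsol s + mu * a\<bar> \<le> delta"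
proof -
  have "r * s\<^sup>2 \<le> r * t1\<^sup>2" using assms r by (intro mult_left_mono power_mono) auto
  then show "\<bar>ysol s - a\<bar> \<le> delta" "\<bar>Qsol s + mu * a\<bar> \<le> delta"
    using deviation_le[OF assms] r by linarith+
qed

lemma ysol_near: "s \<in> {0<..t1} \<Longrightarrow> a / 2 \<le> ysol s \<and> ysol s \<le> 3 * a / 2"
  using deviation_le_delta(1)[of s] delta by auto

lemma continuous_on_ysol: "continuous_on {0<..t2} ysol"
  using ysol_has_derivative by (rule DERIV_continuous_on)

lemma continuous_on_Usol: "continuous_on {0<..t2} Usol"
  using Usol_has_derivative by (rule DERIV_continuous_on)

lemma continuous_on_ddUsol: "continuous_on {0<..t2} ddUsol"
  unfolding ddUsol_def using sin_pos p_gt_1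
  by (intro continuous_intros DERIV_continuous_on[OF dUsol_has_derivative]
        continuous_on_compose2[OF continuous_on_clipped_power[of p UNIV] continuous_on_ysol])
     (auto simp: less_imp_neq[symmetric])

definition "slope_gap = t1 powr d * mu * a / 2"

lemma slope_gap_pos: "slope_gap > 0" using t1_t2 mu_pos a_pos by (simp add: slope_gap_def)

text \<open>\<open>Ssol\<close> decreases, and it is already negative at \<open>t1\<close>.\<close>
lemma Ssol_le:
  assumes "t \<in> {t1..t2}" shows "Ssol t \<le> - slope_gap"
proof -
  have "Ssol t \<le> Ssol t1"
  proof (rule has_real_derivative_nonpos_imp_le[of t1 t Ssol "\<lambda>s. - (s powr (d - 1) * h s * clipped_power Y p (ysol s))"])
    fix x assume x: "x \<in> {t1..t}"
    then have x2: "x \<in> {0<..t2}" using assms t1_t2 by auto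
    show "(Ssol has_real_derivative - (x powr (d - 1) * h x * clipped_power Y p (ysol x))) (at x within {t1..t})"
      by (rule has_field_derivative_subset[OF Ssol_has_derivative[OF x2]]) (use assms t1_t2 in auto)
    show "- (x powr (d - 1) * h x * clipped_power Y p (ysol x)) \<le> 0"
      using h_bounds[OF x2] clipped_power_nonneg by simp
  qed (use assms in auto)
  moreover have "Qsol t1 \<le> - (mu * a / 2)"
    using deviation_le_delta(2)[of t1] t1_t2 delta by auto
  then have "Ssol t1 \<le> - slope_gap"
    using mult_left_mono[of "Qsol t1" "- (mu * a / 2)" "t1 powr d"] by (simp add: Ssol_def slope_gap_def)
  ultimately show ?thesis by simp
qed

lemma dUsol_le:
  assumes "t \<in> {t1..t2}" shows "dUsol t \<le> - slope_gap / (sin t)\<^sup>2"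
proof -
  have "sin t > 0" using sin_pos assms t1_t2 by auto
  have "(sin t) ^ (N - 1) \<le> (sin t)\<^sup>2"
    using N_ge_3 \<open>sin t > 0\<close> by (intro power_decreasing) auto
  then have "slope_gap / (sin t)\<^sup>2 \<le> slope_gap / (sin t) ^ (N - 1)"
    using slope_gap_pos \<open>sin t > 0\<close> by (intro divide_left_mono) auto
  moreover have "dUsol t \<le> - slope_gap / (sin t) ^ (N - 1)"
    using divide_right_mono[OF Ssol_le[OF assms], of "(sin t) ^ (N - 1)"] \<open>sin t > 0\<close>
    by (simp add: dUsol_def)
  ultimately show ?thesis by simp
qed

lemma dUsol_neg: "t \<in> {t1..t2} \<Longrightarrow> dUsol t < 0"
proof -
  assume t: "t \<in> {t1..t2}"
  then have "sin t > 0" using sin_pos[of t] t1_t2 by auto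
  then have "slope_gap / (sin t)\<^sup>2 > 0" using slope_gap_pos by simp
  then show ?thesis using dUsol_le[OF t] by linarith
qed

lemma Usol_t1_pos: "Usol t1 > 0"
  using ysol_near[of t1] t1_t2 a_pos by (simp add: Usol_def)

lemma Usol_t1_le: "Usol t1 \<le> t1 powr (- mu) * (3 * a / 2)"
  using ysol_near[of t1] t1_t2 by (simp add: Usol_def mult_left_mono)

text \<open>Comparison with \<open>slope_gap * cot\<close>, whose derivative is \<open>- slope_gap / sin\<^sup>2\<close>.\<close>
lemma Usol_t2_neg: "Usol t2 < 0"
proof -
  have "(\<lambda>s. Usol s - slope_gap * cot s) t2 \<le> (\<lambda>s. Usol s - slope_gap * cot s) t1"
  proof (rule has_real_derivative_nonpos_imp_le[of t1 t2 _ "\<lambda>s. dUsol s + slope_gap / (sin s)\<^sup>2"])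
    fix x assume x: "x \<in> {t1..t2}"
    then have x2: "x \<in> {0<..t2}" using t1_t2 by auto
    have "sin x \<noteq> 0" using sin_pos[OF x2] by simp
    have "((\<lambda>s. Usol s - slope_gap * cot s) has_real_derivative
        dUsol x - slope_gap * (- inverse ((sin x)\<^sup>2))) (at x within {t1..t2})"
      by (intro DERIV_diff DERIV_cmult has_field_derivative_subset[OF Usol_has_derivative[OF x2]]
          has_field_derivative_at_within[OF DERIV_cot[OF \<open>sin x \<noteq> 0\<close>]]) (use t1_t2 in auto)
    then show "((\<lambda>s. Usol s - slope_gap * cot s) has_real_derivative dUsol x + slope_gap / (sin x)\<^sup>2)
        (at x within {t1..t2})"
      by (simp add: divide_inverse)
    show "dUsol x + slope_gap / (sin x)\<^sup>2 \<le> 0" using dUsol_le[OF x] by linarith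
  qed (use t1_t2 in auto)
  then show ?thesis
    using Usol_t1_le shooting by (simp add: slope_gap_def algebra_simps)
qed

lemma Usol_strict_decreasing:
  assumes "t1 \<le> x" "x < y" "y \<le> t2" shows "Usol y < Usol x"
proof (rule has_real_derivative_neg_imp_less[OF assms(2)])
  fix z assume z: "z \<in> {x..y}"
  then have "z \<in> {0<..t2}" "z \<in> {t1..t2}" using assms t1_t2 by auto
  show "(Usol has_real_derivative dUsol z) (at z within {x..y})"
    by (rule has_field_derivative_subset[OF Usol_has_derivative[OF \<open>z \<in> {0<..t2}\<close>]]) (use assms t1_t2 in auto)
  show "dUsol z < 0" using dUsol_neg[OF \<open>z \<in> {t1..t2}\<close>] .
qed

lemma ysol_tendsto: "(ysol \<longlongrightarrow> a) (at_right 0)"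
proof -
  have "\<forall>\<^sub>F x in at_right 0. norm (ysol x - a) \<le> r * x\<^sup>2"
    unfolding eventually_at_right_field using t1_t2 deviation_le(1)
    by (intro exI[of _ t1]) (auto simp: less_imp_le)
  moreover have "((\<lambda>x::real. r * x\<^sup>2) \<longlongrightarrow> r * 0\<^sup>2) (at_right 0)"
    by (intro tendsto_intros)
  ultimately have "((\<lambda>x. ysol x - a) \<longlongrightarrow> 0) (at_right 0)"
    by (auto intro: Lim_null_comparison)
  then show ?thesis by (simp add: LIM_zero_iff)
qed

lemma Usol_asymptotics:
  "((\<lambda>x. Usol x / (a * cos (x / 2) powr (- (real N - 2)) * (2 * tan (x / 2)) powr (- mu))) \<longlongrightarrow> 1)
     (at_right 0)"
proof -
  have "\<forall>\<^sub>F x in at_right 0. (ysol x / a) * cos (x / 2) powr (real N - 2) * (2 * tan (x / 2) / x) powr mu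
      = Usol x / (a * cos (x / 2) powr (- (real N - 2)) * (2 * tan (x / 2)) powr (- mu))"
    unfolding eventually_at_right_field
  proof (intro exI[of _ 1] conjI allI impI)
    fix x :: real assume x: "0 < x" "x < 1"
    then have "cos (x / 2) > 0" "tan (x / 2) > 0" using pi_gt3 by (auto intro!: cos_gt_zero tan_gt_zero)
    then show "(ysol x / a) * cos (x / 2) powr (real N - 2) * (2 * tan (x / 2) / x) powr mu
        = Usol x / (a * cos (x / 2) powr (- (real N - 2)) * (2 * tan (x / 2)) powr (- mu))"
      using x a_pos by (simp add: Usol_def powr_minus powr_divide field_simps flip: powr_add)
  qed simp
  moreover have "((\<lambda>x. (ysol x / a) * cos (x / 2) powr (real N - 2) * (2 * tan (x / 2) / x) powr mu)
      \<longlongrightarrow> (a / a) * cos (0 / 2) powr (real N - 2) * 1 powr mu) (at_right 0)"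
    using a_pos by (intro tendsto_intros ysol_tendsto tendsto_powr' tan_half_over_tendsto tendsto_ident_at) auto
  ultimately show ?thesis using a_pos by (simp add: tendsto_cong)
qed

lemma exists_zero: "\<exists>\<Theta>. t1 < \<Theta> \<and> \<Theta> < t2 \<and> Usol \<Theta> = 0"
proof -
  obtain \<Theta> where "t1 \<le> \<Theta>" "\<Theta> \<le> t2" "Usol \<Theta> = 0"
    using IVT2'[of Usol t2 0 t1] Usol_t1_pos Usol_t2_neg t1_t2
      continuous_on_subset[OF continuous_on_Usol, of "{t1..t2}"] by force
  moreover have "\<Theta> \<noteq> t1" "\<Theta> \<noteq> t2" using Usol_t1_pos Usol_t2_neg \<open>Usol \<Theta> = 0\<close> by auto
  ultimately show ?thesis by force
qed

context
  fixes \<Theta> assumes \<Theta>: "t1 < \<Theta>" "\<Theta> < t2" "Usol \<Theta> = 0"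
begin

lemma Usol_pos: "x \<in> {0<..<\<Theta>} \<Longrightarrow> Usol x > 0"
  using ysol_near[of x] a_pos Usol_strict_decreasing[of x \<Theta>] \<Theta>
  by (cases "x \<le> t1") (auto simp: Usol_def)

lemma ysol_le_Y:
  assumes x: "x \<in> {0<..<\<Theta>}" shows "0 < ysol x \<and> ysol x \<le> Y"
proof (cases "x \<le> t1")
  case True
  then show ?thesis using ysol_near[of x] x a_pos Y by auto
next
  case False
  have "ysol x = x powr mu * Usol x" using x by (simp add: Usol_def powr_minus field_simps)
  moreover have "Usol x \<le> t1 powr (- mu) * (3 * a / 2)"
    using Usol_strict_decreasing[of t1 x] Usol_t1_le False \<Theta> x by force
  moreover have "x powr mu \<le> pi powr mu" using x \<Theta> t1_t2 mu_pos by (intro powr_mono2) auto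
  ultimately have "ysol x \<le> pi powr mu * (t1 powr (- mu) * (3 * a / 2))"
    using Usol_pos[OF x] mult_mono[of "x powr mu" "pi powr mu" "Usol x" "t1 powr (- mu) * (3 * a / 2)"]
    by simp
  then show ?thesis using Y \<open>ysol x = x powr mu * Usol x\<close> Usol_pos[OF x] x by (auto simp: algebra_simps)
qed

lemma Usol_equation:
  assumes x: "x \<in> {0<..<\<Theta>}"
  shows "ddUsol x + (real N - 1) * (cos x / sin x) * dUsol x + Usol x powr p = 0"
proof -
  have "Usol x powr p = (x powr (- mu)) powr p * ysol x powr p"
    using ysol_le_Y[OF x] x by (simp add: Usol_def powr_mult)
  also have "(x powr (- mu)) powr p = x powr (- mu - 2)"
    using mu_times_p by (simp add: powr_powr algebra_simps)
  finally show ?thesis using ysol_le_Y[OF x] by (simp add: ddUsol_def clipped_power_eq)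
qed

end

lemma singular_solution:
  "\<exists>\<Theta> U U' U''. 0 < \<Theta> \<and> \<Theta> < pi \<and>
     (\<forall>x\<in>{0<..\<Theta>}. (U has_real_derivative U' x) (at x within {0<..\<Theta>}) \<and>
                         (U' has_real_derivative U'' x) (at x within {0<..\<Theta>})) \<and>
     continuous_on {0<..\<Theta>} U'' \<and>
     (\<forall>x\<in>{0<..<\<Theta>}. U'' x + (real N - 1) * (cos x / sin x) * U' x + U x powr p = 0) \<and>
     U \<Theta> = 0 \<and> (\<forall>x\<in>{0<..<\<Theta>}. U x > 0) \<and>
     ((\<lambda>x. U x / (a * cos (x / 2) powr (-(real N - 2)) * (2 * tan (x / 2)) powr (-mu))) \<longlongrightarrow> 1) (at_right 0)"
proof -
  obtain \<Theta> where \<Theta>: "t1 < \<Theta>" "\<Theta> < t2" "Usol \<Theta> = 0" using exists_zero by blast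
  have sub: "{0<..\<Theta>} \<subseteq> {0<..t2}" using \<Theta> by auto
  have "(Usol has_real_derivative dUsol x) (at x within {0<..\<Theta>}) \<and>
        (dUsol has_real_derivative ddUsol x) (at x within {0<..\<Theta>})" if "x \<in> {0<..\<Theta>}" for x
    using that sub has_field_derivative_subset[OF Usol_has_derivative sub]
      has_field_derivative_subset[OF dUsol_has_derivative sub] by blast
  then show ?thesis
    using \<Theta> t1_t2 Usol_pos Usol_equation Usol_asymptotics continuous_on_subset[OF continuous_on_ddUsol sub]
    by (intro exI[of _ \<Theta>] exI[of _ Usol] exI[of _ dUsol] exI[of _ ddUsol]) auto
qed

end


section \<open>Choice of the parameters\<close>

context supercritical
begin

lemma exists_delta:
  assumes "eps > 0"
  obtains delta where "0 < delta" "delta \<le> a / 2" "delta \<le> mu * a / 2"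
    "\<And>z. \<bar>z\<bar> \<le> delta \<Longrightarrow> \<bar>p * (a + z) powr (p - 1) - c0\<bar> \<le> eps"
proof -
  have "isCont (\<lambda>z. p * (a + z) powr (p - 1)) 0"
    using a_pos by (auto intro!: continuous_intros)
  then obtain delta0 where "delta0 > 0" and delta0: "\<And>z. z \<noteq> 0 \<and> norm (z - 0) < delta0 \<Longrightarrow>
      norm (p * (a + z) powr (p - 1) - p * (a + 0) powr (p - 1)) < eps"
    using LIM_D[of _ _ 0 eps] assms unfolding isCont_def by blast
  have "\<bar>p * (a + z) powr (p - 1) - c0\<bar> \<le> eps" if "\<bar>z\<bar> < delta0" for z
    using delta0[of z] that assms by (cases "z = 0") (auto simp: c0_def)
  moreover have "0 < min (delta0 / 2) (min (a / 2) (mu * a / 2))"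
    using \<open>delta0 > 0\<close> a_pos mu_pos by auto
  ultimately show ?thesis
    using \<open>delta0 > 0\<close> by (intro that[of "min (delta0 / 2) (min (a / 2) (mu * a / 2))"]) auto
qed

lemma lipschitz_near:
  assumes delta: "0 < delta" "delta \<le> a / 2" and Y: "3 * a / 2 \<le> Y"
    and eps: "\<And>z. \<bar>z\<bar> \<le> delta \<Longrightarrow> \<bar>p * (a + z) powr (p - 1) - c0\<bar> \<le> eps"
    and hs: "0 < hs" "hs \<le> 1" "1 - hs \<le> beta"
    and xy: "\<bar>x\<bar> \<le> delta" "\<bar>y\<bar> \<le> delta"
  shows "\<bar>(c0 * x - hs * clipped_power Y p (a + x)) - (c0 * y - hs * clipped_power Y p (a + y))\<bar>
      \<le> (eps + beta * (p * (3 * a / 2) powr (p - 1))) * \<bar>x - y\<bar>"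
proof -
  have clipped: "clipped_power Y p (a + z) = (a + z) powr p" if "\<bar>z\<bar> \<le> delta" for z
    using that delta Y a_pos by (intro clipped_power_eq) auto
  have "\<bar>(c0 * x - hs * (a + x) powr p) - (c0 * y - hs * (a + y) powr p)\<bar>
      \<le> (eps + beta * (p * (3 * a / 2) powr (p - 1))) * \<bar>x - y\<bar>"
  proof (rule lipschitz_of_deriv_bound[where u="-delta" and v=delta])
    show "continuous_on {-delta..delta} (\<lambda>z. c0 * z - hs * (a + z) powr p)"
      using delta a_pos p_gt_1 by (intro continuous_intros continuous_on_powr') auto
    fix z assume z: "z \<in> {-delta<..<delta}"
    then have "a + z > 0" using delta a_pos by auto
    then show "((\<lambda>z. c0 * z - hs * (a + z) powr p) has_real_derivative c0 - hs * (p * (a + z) powr (p - 1))) (at z)"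
      by (auto intro!: derivative_eq_intros DERIV_powr simp: algebra_simps)
    have "0 \<le> p * (a + z) powr (p - 1)" "p * (a + z) powr (p - 1) \<le> p * (3 * a / 2) powr (p - 1)"
      using \<open>a + z > 0\<close> z delta p_gt_1 by (auto intro!: mult_left_mono powr_mono2)
    then have "0 \<le> (1 - hs) * (p * (a + z) powr (p - 1))"
      "(1 - hs) * (p * (a + z) powr (p - 1)) \<le> beta * (p * (3 * a / 2) powr (p - 1))"
      using hs by (auto intro: mult_mono)
    moreover have "\<bar>z\<bar> \<le> delta" using z by auto
    then have "\<bar>c0 - p * (a + z) powr (p - 1)\<bar> \<le> eps" using eps[of z] by (simp add: abs_minus_commute)
    moreover have "c0 - hs * (p * (a + z) powr (p - 1)) =
        (c0 - p * (a + z) powr (p - 1)) + (1 - hs) * (p * (a + z) powr (p - 1))"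
      by (simp add: algebra_simps)
    ultimately show "\<bar>c0 - hs * (p * (a + z) powr (p - 1))\<bar> \<le> eps + beta * (p * (3 * a / 2) powr (p - 1))"
      by linarith
  qed (use xy in auto)
  then show ?thesis using clipped[OF xy(1)] clipped[OF xy(2)] by simp
qed

lemma lipschitz_far:
  assumes hs: "0 < hs" "hs \<le> 1" and Y: "0 \<le> Y"
  shows "\<bar>(c0 * x - hs * clipped_power Y p (a + x)) - (c0 * y - hs * clipped_power Y p (a + y))\<bar>
      \<le> (c0 + p * Y powr (p - 1)) * \<bar>x - y\<bar>"
proof -
  have "\<bar>(c0 * x - hs * clipped_power Y p (a + x)) - (c0 * y - hs * clipped_power Y p (a + y))\<bar>
      \<le> c0 * \<bar>x - y\<bar> + hs * \<bar>clipped_power Y p (a + x) - clipped_power Y p (a + y)\<bar>"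
  proof -
    have "(c0 * x - hs * clipped_power Y p (a + x)) - (c0 * y - hs * clipped_power Y p (a + y)) =
        c0 * (x - y) - hs * (clipped_power Y p (a + x) - clipped_power Y p (a + y))"
      by (simp add: algebra_simps)
    then show ?thesis
      using abs_triangle_ineq4[of "c0 * (x - y)" "hs * (clipped_power Y p (a + x) - clipped_power Y p (a + y))"]
        c0_pos hs by (simp add: abs_mult)
  qed
  also have "hs * \<bar>clipped_power Y p (a + x) - clipped_power Y p (a + y)\<bar> \<le> 1 * (p * Y powr (p - 1) * \<bar>x - y\<bar>)"
    using clipped_power_lipschitz[OF p_gt_1 Y, of "a + x" "a + y"] hs by (intro mult_mono) auto
  finally show ?thesis by (simp add: algebra_simps)
qed

lemma exists_h_far_bound:
  assumes "0 < t1" "t1 \<le> t2" "t2 < pi"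
  obtains H where "\<And>s. s \<in> {t1..t2} \<Longrightarrow> \<bar>1 / h s - 1\<bar> \<le> H"
proof -
  have "\<exists>x\<in>{t1..t2}. \<forall>y\<in>{t1..t2}. h x \<le> h y"
    using assms by (intro continuous_attains_inf continuous_on_subset[OF continuous_on_h]) auto
  then obtain s0 where s0: "s0 \<in> {t1..t2}" "\<And>s. s \<in> {t1..t2} \<Longrightarrow> h s0 \<le> h s" by blast
  have "h s0 > 0" using s0 assms by (intro h_pos) auto
  have "\<bar>1 / h s - 1\<bar> \<le> 1 / h s0 + 1" if "s \<in> {t1..t2}" for s
  proof -
    have "0 < h s" "h s0 \<le> h s" using s0 that assms by (auto intro!: h_pos)
    then have "0 < 1 / h s" "1 / h s \<le> 1 / h s0" using \<open>h s0 > 0\<close> by (auto intro: divide_left_mono)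
    then show ?thesis by linarith
  qed
  then show ?thesis using that by blast
qed

lemma exists_near_scale:
  assumes "0 < eta" "0 < R"
  obtains delta t1 e1 e2 where
    "0 < delta" "delta \<le> a / 2" "delta \<le> mu * a / 2" "0 < t1" "t1 \<le> 1" "R * t1\<^sup>2 \<le> delta"
    "0 \<le> e1" "e1 \<le> real (N - 1) / 5" "0 \<le> e2" "e2 + lam_gap * e1 + e1 \<le> eta"
    "\<And>s. s \<in> {0<..t1} \<Longrightarrow> 1 - h s \<le> real (N - 1) / 5 * s\<^sup>2 \<and> \<bar>1 / h s - 1\<bar> \<le> real (N - 1) / 5 * s\<^sup>2"
    "\<And>s. s \<in> {0<..t1} \<Longrightarrow> \<bar>1 / h s - 1\<bar> \<le> e1"
    "\<And>Y s x y. 3 * a / 2 \<le> Y \<Longrightarrow> s \<in> {0<..t1} \<Longrightarrow> \<bar>x\<bar> \<le> delta \<Longrightarrow> \<bar>y\<bar> \<le> delta \<Longrightarrow>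
       \<bar>(c0 * x - h s * clipped_power Y p (a + x)) - (c0 * y - h s * clipped_power Y p (a + y))\<bar> \<le> e2 * \<bar>x - y\<bar>"
proof -
  obtain delta where delta: "0 < delta" "delta \<le> a / 2" "delta \<le> mu * a / 2"
    "\<And>z. \<bar>z\<bar> \<le> delta \<Longrightarrow> \<bar>p * (a + z) powr (p - 1) - c0\<bar> \<le> eta / 3"
    using exists_delta[of "eta / 3"] assms by auto
  define n where "n = real (N - 1) / 5"
  define C3 where "C3 = p * (3 * a / 2) powr (p - 1)"
  have "0 < n" "0 < C3" using N_ge_3 p_gt_1 a_pos by (auto simp: n_def C3_def)
  then obtain t1 where t1: "0 < t1" "t1 \<le> 1"
    "t1\<^sup>2 \<le> min (1 / (5 * n)) (min (delta / R) (2 * eta / 3 / (n * (C3 + 1 + lam_gap))))"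
    using exists_small_square[of "min (1 / (5 * n)) (min (delta / R) (2 * eta / 3 / (n * (C3 + 1 + lam_gap))))"]
      delta assms lam_gap_nonneg by auto
  define e1 where "e1 = n * t1\<^sup>2"
  have "t1\<^sup>2 \<le> 1 / (5 * n)" "t1\<^sup>2 \<le> delta / R" "t1\<^sup>2 \<le> 2 * eta / 3 / (n * (C3 + 1 + lam_gap))"
    using t1(3) by auto
  moreover have "0 < n * (C3 + 1 + lam_gap)" using \<open>0 < n\<close> \<open>0 < C3\<close> lam_gap_nonneg by simp
  ultimately have "R * t1\<^sup>2 \<le> delta" "real (N - 1) * t1\<^sup>2 \<le> 1" "t1\<^sup>2 * (n * (C3 + 1 + lam_gap)) \<le> 2 * eta / 3"
    using assms \<open>0 < n\<close> by (simp_all only: pos_le_divide_eq) (simp_all add: n_def algebra_simps)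
  then have "e1 * (C3 + 1 + lam_gap) \<le> 2 * eta / 3" by (simp add: e1_def algebra_simps)
  have "e1 \<le> n" using t1 \<open>0 < n\<close> power_le_one[of t1 2] by (simp add: e1_def)
  have near: "1 - h s \<le> n * s\<^sup>2 \<and> \<bar>1 / h s - 1\<bar> \<le> n * s\<^sup>2" if s: "s \<in> {0<..t1}" for s
  proof -
    have "s\<^sup>2 \<le> t1\<^sup>2" using s by (intro power_mono) auto
    then have "real (N - 1) * s\<^sup>2 \<le> 1"
      using \<open>real (N - 1) * t1\<^sup>2 \<le> 1\<close> mult_left_mono[of "s\<^sup>2" "t1\<^sup>2" "real (N - 1)"] by simp
    then show ?thesis using h_near_1[of s] s t1 by (auto simp: n_def)
  qed
  have "n * s\<^sup>2 \<le> e1" if "s \<in> {0<..t1}" for s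
    using that \<open>0 < n\<close> power_mono[of s t1 2] by (auto simp: e1_def)
  note near_e1 = order.trans[OF conjunct2[OF near] this] order.trans[OF conjunct1[OF near] this]
  show ?thesis
  proof (rule that[OF delta(1-3) t1(1,2) \<open>R * t1\<^sup>2 \<le> delta\<close> _ \<open>e1 \<le> n\<close>[unfolded n_def] _ _ near[unfolded n_def]
      near_e1(1)])
    show "0 \<le> e1" "0 \<le> eta / 3 + e1 * C3" using \<open>0 < n\<close> \<open>0 < C3\<close> assms by (auto simp: e1_def)
    show "eta / 3 + e1 * C3 + lam_gap * e1 + e1 \<le> eta"
      using \<open>e1 * (C3 + 1 + lam_gap) \<le> 2 * eta / 3\<close> by (simp add: algebra_simps)
    fix Y s x y assume "3 * a / 2 \<le> Y" "s \<in> {0<..t1}" "\<bar>x\<bar> \<le> delta" "\<bar>y\<bar> \<le> delta"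
    moreover have "0 < h s" "h s \<le> 1" using \<open>s \<in> {0<..t1}\<close> t1 pi_gt3 by (auto intro!: h_pos h_le_1)
    ultimately show "\<bar>(c0 * x - h s * clipped_power Y p (a + x)) - (c0 * y - h s * clipped_power Y p (a + y))\<bar>
        \<le> (eta / 3 + e1 * C3) * \<bar>x - y\<bar>"
      using lipschitz_near[OF delta(1,2) _ delta(4), of Y "h s" e1 x y] near_e1(2) by (simp add: C3_def)
  qed
qed

lemma exists_far_scale:
  assumes "0 < t1" "t1 \<le> 1"
  obtains t2 H where "t1 < t2" "t2 < pi" "0 \<le> H" "\<And>s. s \<in> {t1..t2} \<Longrightarrow> \<bar>1 / h s - 1\<bar> \<le> H"
    "(cot t1 - cot t2) * (t1 powr d * mu * a / 2) > t1 powr (- mu) * (3 * a / 2)"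
proof -
  have gap: "t1 powr d * mu * a / 2 > 0" using assms mu_pos a_pos by simp
  obtain t2 where t2: "pi - 1 \<le> t2" "t2 < pi"
      "cot t2 < cot t1 - t1 powr (- mu) * (3 * a / 2) / (t1 powr d * mu * a / 2)"
    using exists_near_pi_cot_less by blast
  then have "t1 < t2" using assms pi_gt3 by linarith
  obtain H where H: "\<And>s. s \<in> {t1..t2} \<Longrightarrow> \<bar>1 / h s - 1\<bar> \<le> H"
    using exists_h_far_bound[of t1 t2] assms \<open>t1 < t2\<close> t2 by auto
  have "0 \<le> H" using H[of t1] \<open>t1 < t2\<close> by auto
  moreover have "t1 powr (- mu) * (3 * a / 2) / (t1 powr d * mu * a / 2) < cot t1 - cot t2"
    using t2(3) by linarith
  then have "(cot t1 - cot t2) * (t1 powr d * mu * a / 2) > t1 powr (- mu) * (3 * a / 2)"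
    using gap by (simp only: pos_divide_less_eq)
  ultimately show ?thesis using that \<open>t1 < t2\<close> t2 H by blast
qed

lemma forcing_bounds:
  assumes "0 < t1" "2 \<le> k" "0 < s" "s < pi" "0 \<le> n" "0 \<le> H"
    and near: "s \<le> t1 \<Longrightarrow> 1 - h s \<le> n * s\<^sup>2 \<and> \<bar>1 / h s - 1\<bar> \<le> n * s\<^sup>2"
    and far: "\<bar>1 / h s - 1\<bar> \<le> H" and Y: "3 * a / 2 \<le> Y"
  shows "mu * a * \<bar>1 / h s - 1\<bar> \<le> mu * a * n * s\<^sup>2 + mu * a * H / t1\<^sup>2 * (t1 powr (2 - k) * s powr k)"
    and "\<bar>a powr p - h s * clipped_power Y p a\<bar> \<le> a powr p * n * s\<^sup>2 + a powr p / t1\<^sup>2 * (t1 powr (2 - k) * s powr k)"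
proof -
  have "0 < mu * a" "0 < h s" "h s \<le> 1" using mu_pos a_pos assms by (auto intro!: h_pos h_le_1)
  show "mu * a * \<bar>1 / h s - 1\<bar> \<le> mu * a * n * s\<^sup>2 + mu * a * H / t1\<^sup>2 * (t1 powr (2 - k) * s powr k)"
  proof (rule le_two_scale_bound[OF assms(1-3)])
    show "s \<le> t1 \<Longrightarrow> mu * a * \<bar>1 / h s - 1\<bar> \<le> mu * a * n * s\<^sup>2"
      using near mult_left_mono[of "\<bar>1 / h s - 1\<bar>" "n * s\<^sup>2" "mu * a"] \<open>0 < mu * a\<close> by (simp add: mult.assoc)
    show "mu * a * \<bar>1 / h s - 1\<bar> \<le> mu * a * H" using far \<open>0 < mu * a\<close> by (simp add: mult_left_mono)
  qed (use assms \<open>0 < mu * a\<close> in auto)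
  have "\<bar>a powr p - h s * clipped_power Y p a\<bar> = a powr p * (1 - h s)"
    using \<open>0 < h s\<close> \<open>h s \<le> 1\<close> a_pos clipped_power_eq[of a Y p] Y by (simp add: abs_of_nonneg algebra_simps)
  moreover have "a powr p * (1 - h s) \<le> a powr p * n * s\<^sup>2 + a powr p / t1\<^sup>2 * (t1 powr (2 - k) * s powr k)"
  proof (rule le_two_scale_bound[OF assms(1-3)])
    show "s \<le> t1 \<Longrightarrow> a powr p * (1 - h s) \<le> a powr p * n * s\<^sup>2"
      using near mult_left_mono[of "1 - h s" "n * s\<^sup>2" "a powr p"] by (simp add: mult.assoc)
    show "a powr p * (1 - h s) \<le> a powr p"
      using \<open>0 < h s\<close> mult_left_mono[of "1 - h s" 1 "a powr p"] by simp
  qed (use assms in auto)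
  ultimately show "\<bar>a powr p - h s * clipped_power Y p a\<bar> \<le> a powr p * n * s\<^sup>2 + a powr p / t1\<^sup>2 * (t1 powr (2 - k) * s powr k)"
    by simp
qed

lemma exists_contraction_setup: "\<exists>Y t1 t2 k delta r e1 e2 H L F1 F1' F2 F2'.
  contraction_setup N p Y t1 t2 k delta r e1 e2 H L F1 F1' F2 F2'"
proof -
  define n where "n = real (N - 1) / 5"
  define eta where "eta = 1 / (2 * (8 + 6 * lam_gap))"
  define F1 where "F1 = mu * a * n"
  define F2 where "F2 = a powr p * n"
  define eta' where "eta' = F2 + lam_gap * F1 + F1 + 1"
  define r where "r = 2 * (8 + 6 * lam_gap) * eta'"
  have "0 \<le> F1" "0 \<le> F2" using mu_pos a_pos by (simp_all add: F1_def F2_def n_def)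
  then have "0 < eta'" using lam_gap_nonneg by (simp add: eta'_def add_nonneg_pos)
  then have "0 < eta" "0 < r" using lam_gap_nonneg by (simp_all add: eta_def r_def)
  obtain delta t1 e1 e2 where near: "0 < delta" "delta \<le> a / 2" "delta \<le> mu * a / 2" "0 < t1" "t1 \<le> 1"
      "r * t1\<^sup>2 \<le> delta" "0 \<le> e1" "e1 \<le> n" "0 \<le> e2" "e2 + lam_gap * e1 + e1 \<le> eta"
      "\<And>s. s \<in> {0<..t1} \<Longrightarrow> 1 - h s \<le> n * s\<^sup>2 \<and> \<bar>1 / h s - 1\<bar> \<le> n * s\<^sup>2"
      "\<And>s. s \<in> {0<..t1} \<Longrightarrow> \<bar>1 / h s - 1\<bar> \<le> e1"
      and lip_near: "\<And>Y s x y. 3 * a / 2 \<le> Y \<Longrightarrow> s \<in> {0<..t1} \<Longrightarrow> \<bar>x\<bar> \<le> delta \<Longrightarrow> \<bar>y\<bar> \<le> delta \<Longrightarrow>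
       \<bar>(c0 * x - h s * clipped_power Y p (a + x)) - (c0 * y - h s * clipped_power Y p (a + y))\<bar> \<le> e2 * \<bar>x - y\<bar>"
    using exists_near_scale[OF \<open>0 < eta\<close> \<open>0 < r\<close>] unfolding n_def by blast
  obtain t2 H0 where far: "t1 < t2" "t2 < pi" "0 \<le> H0" "\<And>s. s \<in> {t1..t2} \<Longrightarrow> \<bar>1 / h s - 1\<bar> \<le> H0"
      "(cot t1 - cot t2) * (t1 powr d * mu * a / 2) > t1 powr (- mu) * (3 * a / 2)"
    using exists_far_scale[OF near(4,5)] by blast
  define H where "H = max n H0"
  define Y where "Y = max (3 * a / 2) (pi powr mu * t1 powr (- mu) * (3 * a / 2))"
  define L where "L = c0 + p * Y powr (p - 1)"
  define F1' where "F1' = mu * a * H / t1\<^sup>2"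
  define F2' where "F2' = a powr p / t1\<^sup>2"
  define k where "k = max 2 (max ((L + lam_gap * H + H) / eta) ((F2' + lam_gap * F1' + F1') / eta'))"
  have "0 \<le> H" "0 \<le> Y" "0 \<le> L" "0 \<le> F1'" "0 \<le> F2'" "2 \<le> k"
    using far(3) a_pos mu_pos c0_pos p_gt_1 by (auto simp: H_def Y_def L_def F1'_def F2'_def k_def)
  have "(L + lam_gap * H + H) / eta \<le> k" "(F2' + lam_gap * F1' + F1') / eta' \<le> k"
    by (simp_all add: k_def)
  then have "L + lam_gap * H + H \<le> eta * k" "F2' + lam_gap * F1' + F1' \<le> eta' * k"
    using \<open>0 < eta\<close> \<open>0 < eta'\<close> by (simp_all only: pos_divide_le_eq mult.commute)
  have "3 * a / 2 \<le> Y" by (simp add: Y_def)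
  have h_bounds: "0 < h s \<and> h s \<le> 1" if "s \<in> {0<..t2}" for s
    using that far by (auto intro!: h_pos h_le_1)
  have h_far: "\<bar>1 / h s - 1\<bar> \<le> H" if "s \<in> {0<..t2}" for s
  proof (cases "s \<le> t1")
    case True
    then show ?thesis using near(8) near(12)[of s] that by (simp add: H_def)
  next
    case False
    then show ?thesis using far(4)[of s] that by (simp add: H_def)
  qed
  have "contraction_setup N p Y t1 t2 k delta r e1 e2 H L F1 F1' F2 F2'"
  proof (unfold_locales; (intro near far h_far lip_near[OF \<open>3 * a / 2 \<le> Y\<close>])?)
    show "0 \<le> F1" "0 \<le> F1'" "0 \<le> F2" "0 \<le> F2'" "0 \<le> H" "0 \<le> L" "0 < r" "2 \<le> k" by fact+
    show "3 * a / 2 \<le> Y" "pi powr mu * t1 powr - mu * (3 * a / 2) \<le> Y" by (simp_all add: Y_def)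
    show "\<bar>c0 * x - h s * clipped_power Y p (a + x) - (c0 * y - h s * clipped_power Y p (a + y))\<bar> \<le> L * \<bar>x - y\<bar>"
      if "s \<in> {0<..t2}" for s x y
      using lipschitz_far[of "h s" Y x y] h_bounds[OF that] \<open>0 \<le> Y\<close> by (simp add: L_def)
    show "mu * a * \<bar>1 / h s - 1\<bar> \<le> F1 * s\<^sup>2 + F1' * (t1 powr (2 - k) * s powr k)"
      and "\<bar>a powr p - h s * clipped_power Y p a\<bar> \<le> F2 * s\<^sup>2 + F2' * (t1 powr (2 - k) * s powr k)"
      if "s \<in> {0<..t2}" for s
      using forcing_bounds[OF near(4) \<open>2 \<le> k\<close> _ _ _ \<open>0 \<le> H\<close> near(11) h_far[OF that] \<open>3 * a / 2 \<le> Y\<close>]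
        that far(2) near(7,8) unfolding F1_def F1'_def F2_def F2'_def by auto
    have "gain k (e2 + lam_gap * e1) (L + lam_gap * H) e1 H \<le> (8 + 6 * lam_gap) * eta"
      using near lam_gap_nonneg \<open>0 \<le> L\<close> \<open>0 \<le> H\<close> \<open>2 \<le> k\<close> \<open>L + lam_gap * H + H \<le> eta * k\<close>
      by (intro gain_le) (auto simp: algebra_simps)
    moreover have "(8 + 6 * lam_gap) * eta = 1 / 2" using lam_gap_nonneg by (simp add: eta_def)
    ultimately show "gain k (e2 + lam_gap * e1) (L + lam_gap * H) e1 H \<le> 1 / 2" by simp
    have "gain k (F2 + lam_gap * F1) (F2' + lam_gap * F1') F1 F1' \<le> (8 + 6 * lam_gap) * eta'"
      using lam_gap_nonneg \<open>0 \<le> F1\<close> \<open>0 \<le> F2\<close> \<open>0 \<le> F1'\<close> \<open>0 \<le> F2'\<close> \<open>2 \<le> k\<close>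
        \<open>F2' + lam_gap * F1' + F1' \<le> eta' * k\<close>
      by (intro gain_le) (auto simp: eta'_def algebra_simps)
    moreover have "(8 + 6 * lam_gap) * eta' = r / 2" by (simp add: r_def)
    ultimately show "gain k (F2 + lam_gap * F1) (F2' + lam_gap * F1') F1 F1' \<le> r / 2" by simp
  qed
  then show ?thesis by blast
qed

end

theorem theoremC:
  fixes N :: nat and p :: real
  assumes "N \<ge> 3" and "p > (real N + 2) / (real N - 2)"
  shows "\<exists>\<Theta> U U' U''. 0 < \<Theta> \<and> \<Theta> < pi \<and>
     (\<forall>x\<in>{0<..\<Theta>}. (U has_real_derivative U' x) (at x within {0<..\<Theta>}) \<and>
                         (U' has_real_derivative U'' x) (at x within {0<..\<Theta>})) \<and>
     continuous_on {0<..\<Theta>} U'' \<and>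
     (\<forall>x\<in>{0<..<\<Theta>}. U'' x + (real N - 1) * (cos x / sin x) * U' x + U x powr p = 0) \<and>
     U \<Theta> = 0 \<and>
     (\<forall>x\<in>{0<..<\<Theta>}. U x > 0) \<and>
     (let \<mu> = 2 / (p - 1); a = (\<mu> * (real N - 2 - \<mu>)) powr (\<mu> / 2) in
       ((\<lambda>x. U x / (a * cos (x / 2) powr (-(real N - 2)) * (2 * tan (x / 2)) powr (-\<mu>)))
          \<longlongrightarrow> 1) (at_right 0))"
proof -
  interpret supercritical N p by unfold_locales (use assms in auto)
  obtain Y t1 t2 k delta r e1 e2 H L F1 F1' F2 F2' where
    "contraction_setup N p Y t1 t2 k delta r e1 e2 H L F1 F1' F2 F2'"
    using exists_contraction_setup by blast
  then interpret contraction_setup N p Y t1 t2 k delta r e1 e2 H L F1 F1' F2 F2' .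
  show ?thesis using singular_solution by (simp add: Let_def mu_def a_def d_def)
qed

end
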